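(* Let $\mathfrak h$ be a finite-dimensional real vector space with a non-degenerate symmetric bilinear form $\langle-,-\rangle$, and $\Lambda\subset\mathfrak h$ an even lattice (discrete subgroup with $\langle\alpha,\alpha\rangle\in2\mathbb Z$; not necessarily full rank, and $\langle-,-\rangle|_\Lambda$ possibly degenerate). Let $\Lambda^*=\{\mu\in\mathfrak h:\langle\mu,\Lambda\rangle\subset\mathbb Z\}$, $\Lambda^\perp=\{\mu\in\mathfrak h:\langle\mu,\Lambda\rangle=0\}$ and $\Lambda^\circ=\{v\in\Lambda:\langle v,w\rangle=0\ \forall w\in\Lambda\}$. Then: (1) there is a finitely generated free abelian subgroup $\Gamma\subset\Lambda^*$ with $\Lambda^*=\Lambda^\perp\oplus\Gamma$ (internal direct sum of $\mathbb Z$-modules); (2) $\Gamma$ may be chosen so that there exist a real vector subspace $V\subset\Lambda^\perp$ and finitely generated free subgroups $F,D\subset\Gamma$ with $\Lambda^*=V\oplus\mathbb R\Lambda^\circ\oplus F\oplus D$, where the three subgroups $V$, $\mathbb R\Lambda^\circ\oplus F$ and $D$ are mutually orthogonal, $\langle-,-\rangle$ restricted to each of these three is non-degenerate, and $\langle-,-\rangle$ restricted to $\mathbb R\Lambda^\circ$ and to $F$ individually is identically zero.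
   Context: $\mathbb R\Lambda^\circ$ denotes the real span of $\Lambda^\circ$. *)

theory Defs
  imports "HOL-Analysis.Analysis"
begin

definition add_subgroup :: "'a::ab_group_add set \<Rightarrow> bool" where
  "add_subgroup A \<longleftrightarrow> 0 \<in> A \<and> (\<forall>x\<in>A. \<forall>y\<in>A. x + y \<in> A) \<and> (\<forall>x\<in>A. - x \<in> A)"

definition int_comb :: "'a::real_vector list \<Rightarrow> (nat \<Rightarrow> int) \<Rightarrow> 'a" where
  "int_comb bs c = (\<Sum>i<length bs. of_int (c i) *\<^sub>R bs ! i)"

definition fg_free_subgroup :: "'a::real_vector set \<Rightarrow> bool" where
  "fg_free_subgroup G \<longleftrightarrow>
     (\<exists>bs. G = range (int_comb bs) \<and>
           (\<forall>c. int_comb bs c = 0 \<longrightarrow> (\<forall>i<length bs. c i = 0)))"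

definition internal_dsum :: "'a::ab_group_add set list \<Rightarrow> 'a set \<Rightarrow> bool" where
  "internal_dsum Ss C \<longleftrightarrow>
     (\<forall>xs. length xs = length Ss \<and> (\<forall>i<length Ss. xs ! i \<in> Ss ! i) \<longrightarrow> sum_list xs \<in> C) \<and>
     (\<forall>c\<in>C. \<exists>!xs. length xs = length Ss \<and> (\<forall>i<length Ss. xs ! i \<in> Ss ! i) \<and> sum_list xs = c)"

definition set_sum :: "'a::ab_group_add set \<Rightarrow> 'a set \<Rightarrow> 'a set" where
  "set_sum A B = {a + b | a b. a \<in> A \<and> b \<in> B}"

definition nondegenerate_on :: "('a \<Rightarrow> 'a \<Rightarrow> real) \<Rightarrow> 'a::real_vector set \<Rightarrow> bool" where
  "nondegenerate_on B S \<longleftrightarrow> (\<forall>x\<in>S. (\<forall>y\<in>S. B x y = 0) \<longrightarrow> x = 0)"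

definition orthogonal_sets :: "('a \<Rightarrow> 'a \<Rightarrow> real) \<Rightarrow> 'a set \<Rightarrow> 'a set \<Rightarrow> bool" where
  "orthogonal_sets B S T \<longleftrightarrow> (\<forall>x\<in>S. \<forall>y\<in>T. B x y = 0)"

definition dual_lattice :: "('a \<Rightarrow> 'a \<Rightarrow> real) \<Rightarrow> 'a set \<Rightarrow> 'a set" where
  "dual_lattice B L = {\<mu>. \<forall>a\<in>L. B \<mu> a \<in> \<int>}"

definition perp_space :: "('a \<Rightarrow> 'a \<Rightarrow> real) \<Rightarrow> 'a set \<Rightarrow> 'a set" where
  "perp_space B L = {\<mu>. \<forall>a\<in>L. B \<mu> a = 0}"

definition radical :: "('a \<Rightarrow> 'a \<Rightarrow> real) \<Rightarrow> 'a set \<Rightarrow> 'a set" where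
  "radical B L = {v\<in>L. \<forall>w\<in>L. B v w = 0}"

end

theory Submission
  imports Defs
begin

text \<open>A discrete subgroup \<Lambda> of a Euclidean space has a \<int>-basis that is linearly independent
  over \<real>. As B is integral on \<Lambda>, the pairing map x \<mapsto> \<Sum>_j B(x, l_j) l_j sends \<Lambda> into itself;
  its kernel on \<Lambda> is the radical \<Lambda>\<degree>, so lifting a basis of its image splits
  \<Lambda> = \<Lambda>\<degree> \<oplus> \<int>ss with B nondegenerate on \<real>ss. Nondegeneracy of B then gives vectors fs dual to a
  basis rs of \<Lambda>\<degree>, made isotropic by subtracting half of their Gram matrix, and vectors ds in \<real>ss
  dual to ss. Every vector is uniquely v + \<Sum> a_i r_i + \<Sum> b_i f_i + \<Sum> c_i d_i with v orthogonal to
  rs, fs and ss, the coefficients being the pairings with fs, rs and ss; it lies in \<Lambda>^* iff the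
  b_i and c_i are integers. This yields \<Lambda>^* = \<Lambda>^\<bottom> \<oplus> \<Gamma> with \<Gamma> = \<int>fs \<oplus> \<int>ds, and
  \<Lambda>^* = V \<oplus> \<real>\<Lambda>\<degree> \<oplus> \<int>fs \<oplus> \<int>ds.\<close>

definition lin_comb :: "'a::real_vector list \<Rightarrow> (nat \<Rightarrow> real) \<Rightarrow> 'a" where
  "lin_comb bs c = (\<Sum>i<length bs. c i *\<^sub>R bs ! i)"

definition independent_list :: "'a::real_vector list \<Rightarrow> bool" where
  "independent_list bs \<longleftrightarrow> (\<forall>c. lin_comb bs c = 0 \<longrightarrow> (\<forall>i<length bs. c i = 0))"

lemma int_comb_eq_lin_comb: "int_comb bs c = lin_comb bs (\<lambda>i. of_int (c i))"
  by (simp add: int_comb_def lin_comb_def)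

lemma lin_comb_add: "lin_comb bs c + lin_comb bs d = lin_comb bs (\<lambda>i. c i + d i)"
  by (simp add: lin_comb_def scaleR_add_left sum.distrib)

lemma lin_comb_diff: "lin_comb bs c - lin_comb bs d = lin_comb bs (\<lambda>i. c i - d i)"
  by (simp add: lin_comb_def scaleR_diff_left sum_subtractf)

lemma lin_comb_scaleR: "a *\<^sub>R lin_comb bs c = lin_comb bs (\<lambda>i. a * c i)"
  by (simp add: lin_comb_def scaleR_sum_right)

lemma lin_comb_cong: "(\<And>i. i < length bs \<Longrightarrow> c i = d i) \<Longrightarrow> lin_comb bs c = lin_comb bs d"
  by (simp add: lin_comb_def)

lemma lin_comb_eq_0: "(\<And>i. i < length bs \<Longrightarrow> c i = 0) \<Longrightarrow> lin_comb bs c = 0"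
  by (simp add: lin_comb_def)

lemma lin_comb_snoc: "lin_comb (bs @ [b]) c = lin_comb bs c + c (length bs) *\<^sub>R b"
proof -
  have "lin_comb bs c = (\<Sum>i<length bs. c i *\<^sub>R (bs @ [b]) ! i)"
    unfolding lin_comb_def by (rule sum.cong) (auto simp: nth_append)
  then show ?thesis by (simp add: lin_comb_def)
qed

lemma lin_comb_append:
  "lin_comb (bs @ cs) c = lin_comb bs c + lin_comb cs (\<lambda>i. c (length bs + i))"
proof (induction cs rule: rev_induct)
  case (snoc b cs)
  then show ?case
    using lin_comb_snoc[of "bs @ cs" b c] lin_comb_snoc[of cs b "\<lambda>i. c (length bs + i)"]
    by (simp add: algebra_simps)
qed (simp add: lin_comb_def)

lemma lin_comb_unit: "i < length bs \<Longrightarrow> lin_comb bs (\<lambda>j. if j = i then 1 else 0) = bs ! i"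
  by (simp add: lin_comb_def if_distrib[of "\<lambda>a. a *\<^sub>R _"] cong: if_cong)

lemma linear_lin_comb: "linear f \<Longrightarrow> f (lin_comb bs c) = lin_comb (map f bs) c"
  by (simp add: lin_comb_def linear_sum linear_scale)

lemma bilinear_lin_comb_left:
  "bilinear B \<Longrightarrow> B (lin_comb bs c) y = (\<Sum>i<length bs. c i * B (bs ! i) y)"
proof -
  assume "bilinear B"
  then have "linear (\<lambda>x. B x y)" by (simp add: bilinear_def)
  then show ?thesis
    using linear_sum[of "\<lambda>x. B x y" "\<lambda>i. c i *\<^sub>R bs ! i"] linear_scale[of "\<lambda>x. B x y"]
    by (simp add: lin_comb_def)
qed

lemma bilinear_lin_comb_right:
  "bilinear B \<Longrightarrow> B y (lin_comb bs c) = (\<Sum>i<length bs. c i * B y (bs ! i))"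
proof -
  assume "bilinear B"
  then have "linear (\<lambda>x. B y x)" by (simp add: bilinear_def)
  then show ?thesis by (simp add: lin_comb_def linear_sum linear_scale)
qed

lemma bilinear_lin_comb_left_unit:
  fixes B :: "'a::real_vector \<Rightarrow> 'b::real_vector \<Rightarrow> real"
  assumes "bilinear B" "j < length bs" "\<And>i. i < length bs \<Longrightarrow> B (bs ! i) y = (if i = j then 1 else 0)"
  shows "B (lin_comb bs c) y = c j"
proof -
  have "(\<Sum>i<length bs. c i * B (bs ! i) y) = (\<Sum>i\<in>{j}. c i * B (bs ! i) y)"
    using assms(2,3) by (intro sum.mono_neutral_right) auto
  then show ?thesis using assms by (simp add: bilinear_lin_comb_left)
qed

lemma bilinear_lin_comb_left_eq_0:
  fixes B :: "'a::real_vector \<Rightarrow> 'b::real_vector \<Rightarrow> real"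
  assumes "bilinear B" "\<And>i. i < length bs \<Longrightarrow> B (bs ! i) y = 0"
  shows "B (lin_comb bs c) y = 0"
  unfolding bilinear_lin_comb_left[OF assms(1)] using assms(2) by simp

lemma bilinear_lin_comb_right_eq_0:
  fixes B :: "'a::real_vector \<Rightarrow> 'b::real_vector \<Rightarrow> real"
  assumes "bilinear B" "\<And>i. i < length bs \<Longrightarrow> B y (bs ! i) = 0"
  shows "B y (lin_comb bs c) = 0"
  unfolding bilinear_lin_comb_right[OF assms(1)] using assms(2) by simp

lemma lin_comb_in_span: "lin_comb bs c \<in> span (set bs)"
  unfolding lin_comb_def by (intro span_sum span_scale span_base) auto

lemma range_lin_comb: "range (lin_comb bs) = span (set bs)"
proof
  show "range (lin_comb bs) \<subseteq> span (set bs)"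
    using lin_comb_in_span by blast
  have "subspace (range (lin_comb bs))"
    unfolding subspace_def
    using lin_comb_eq_0[of bs "\<lambda>_. 0"] by (auto simp: lin_comb_add lin_comb_scaleR)
  moreover have "set bs \<subseteq> range (lin_comb bs)"
    by (auto simp: in_set_conv_nth) (metis lin_comb_unit rangeI)
  ultimately show "span (set bs) \<subseteq> range (lin_comb bs)"
    using span_minimal by blast
qed

lemma span_set_lin_comb: "x \<in> span (set bs) \<Longrightarrow> \<exists>c. x = lin_comb bs c"
  using range_lin_comb by blast

lemma independent_list_coeff_eq:
  assumes "independent_list bs" "lin_comb bs c = lin_comb bs d" "i < length bs"
  shows "c i = d i"
  using assms lin_comb_diff[of bs c d] unfolding independent_list_def by fastforce

lemma lin_comb_eq_sum_set:
  assumes "distinct bs"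
  shows "lin_comb bs (\<lambda>i. u (bs ! i)) = (\<Sum>v\<in>set bs. u v *\<^sub>R v)"
proof -
  have "inj_on ((!) bs) {..<length bs}"
    using assms by (simp add: inj_on_def nth_eq_iff_index_eq)
  moreover have "(!) bs ` {..<length bs} = set bs"
    by (auto simp: in_set_conv_nth)
  ultimately show ?thesis
    by (metis (no_types, lifting) lin_comb_def sum.reindex_cong)
qed

lemma independent_list_distinct:
  assumes ind: "independent_list bs"
  shows "distinct bs"
proof (rule ccontr)
  assume "\<not> distinct bs"
  then obtain i j where ij: "i < length bs" "j < length bs" "i \<noteq> j" "bs ! i = bs ! j"
    by (auto simp: distinct_conv_nth)
  have "lin_comb bs (\<lambda>k. (if k = i then 1 else 0) - (if k = j then 1 else 0)) = 0"
    using ij by (simp add: lin_comb_diff[symmetric] lin_comb_unit)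
  then show False using ind ij unfolding independent_list_def by force
qed

lemma independent_list_iff:
  fixes bs :: "'a::real_vector list"
  shows "independent_list bs \<longleftrightarrow> distinct bs \<and> independent (set bs)"
proof
  assume ind: "independent_list bs"
  then have dist: "distinct bs" by (rule independent_list_distinct)
  moreover have "independent (set bs)"
  proof
    assume "dependent (set bs)"
    then obtain u where u: "\<exists>v\<in>set bs. u v \<noteq> 0" "(\<Sum>v\<in>set bs. u v *\<^sub>R v) = 0"
      using dependent_finite by blast
    then have "\<forall>i<length bs. u (bs ! i) = 0"
      using ind lin_comb_eq_sum_set[OF dist] unfolding independent_list_def by metis
    then show False using u(1) by (auto simp: in_set_conv_nth)
  qed
  ultimately show "distinct bs \<and> independent (set bs)" ..
next
  assume "distinct bs \<and> independent (set bs)"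
  then have dist: "distinct bs" and ind: "independent (set bs)" by auto
  show "independent_list bs"
    unfolding independent_list_def
  proof (intro allI impI)
    fix c i assume c: "lin_comb bs c = 0" and i: "i < length bs"
    define u where "u v = c (THE j. j < length bs \<and> bs ! j = v)" for v
    have u_nth: "u (bs ! k) = c k" if "k < length bs" for k
    proof -
      have "(THE j. j < length bs \<and> bs ! j = bs ! k) = k"
        using that dist by (auto intro!: the_equality simp: nth_eq_iff_index_eq)
      then show ?thesis by (simp add: u_def)
    qed
    have "lin_comb bs (\<lambda>k. u (bs ! k)) = lin_comb bs c"
      by (rule lin_comb_cong) (simp add: u_nth)
    then have "\<forall>v\<in>set bs. u v = 0"
      using c lin_comb_eq_sum_set[OF dist] ind dependent_finite[of "set bs"] by auto
    then show "c i = 0" using i u_nth by force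
  qed
qed

lemma independent_list_snocI:
  assumes "independent_list bs" "\<And>u a. lin_comb bs u + a *\<^sub>R b = 0 \<Longrightarrow> a = 0"
  shows "independent_list (bs @ [b])"
  unfolding independent_list_def
proof (intro allI impI)
  fix c i assume c: "lin_comb (bs @ [b]) c = 0" and i: "i < length (bs @ [b])"
  then have "lin_comb bs c + c (length bs) *\<^sub>R b = 0" by (simp add: lin_comb_snoc)
  moreover from this assms(2) have "c (length bs) = 0" by blast
  ultimately have "\<forall>i<length bs. c i = 0" using assms(1) unfolding independent_list_def by simp
  with i \<open>c (length bs) = 0\<close> show "c i = 0" by (cases "i = length bs") auto
qed

lemma independent_list_snocD:
  assumes "independent_list (bs @ [b])"
  shows "independent_list bs" and "lin_comb bs u + a *\<^sub>R b = 0 \<Longrightarrow> a = 0"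
proof -
  have *: "lin_comb bs u + a *\<^sub>R b = 0 \<Longrightarrow> a = 0 \<and> (\<forall>i<length bs. u i = 0)" for u a
  proof -
    assume "lin_comb bs u + a *\<^sub>R b = 0"
    moreover have "lin_comb bs (u(length bs := a)) = lin_comb bs u"
      by (rule lin_comb_cong) auto
    ultimately have "lin_comb (bs @ [b]) (u(length bs := a)) = 0"
      by (simp add: lin_comb_snoc)
    then have *: "\<forall>i<Suc (length bs). (u(length bs := a)) i = 0"
      using assms unfolding independent_list_def by (metis length_append_singleton)
    then have "a = 0" by (metis fun_upd_same lessI)
    moreover have "\<forall>i<length bs. u i = 0"
      using * by (metis fun_upd_other less_SucI less_irrefl_nat)
    ultimately show ?thesis ..
  qed
  then show "independent_list bs" unfolding independent_list_def by (metis scale_zero_left add_0_right)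
  show "lin_comb bs u + a *\<^sub>R b = 0 \<Longrightarrow> a = 0" using * by blast
qed

lemma independent_list_appendD: "independent_list (bs @ cs) \<Longrightarrow> independent_list cs"
  by (simp add: independent_list_iff) (metis independent_mono sup_ge2)

section \<open>Additive subgroups and lattices\<close>

lemma add_subgroup_0: "add_subgroup G \<Longrightarrow> 0 \<in> G"
  by (simp add: add_subgroup_def)

lemma add_subgroup_add: "add_subgroup G \<Longrightarrow> x \<in> G \<Longrightarrow> y \<in> G \<Longrightarrow> x + y \<in> G"
  by (simp add: add_subgroup_def)

lemma add_subgroup_uminus: "add_subgroup G \<Longrightarrow> x \<in> G \<Longrightarrow> - x \<in> G"
  by (simp add: add_subgroup_def)

lemma add_subgroup_diff: "add_subgroup G \<Longrightarrow> x \<in> G \<Longrightarrow> y \<in> G \<Longrightarrow> x - y \<in> G"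
  by (metis add_subgroup_add add_subgroup_uminus diff_conv_add_uminus)

lemma add_subgroup_sum: "add_subgroup G \<Longrightarrow> (\<And>i. i \<in> I \<Longrightarrow> f i \<in> G) \<Longrightarrow> sum f I \<in> G"
  by (induction I rule: infinite_finite_induct) (auto simp: add_subgroup_0 add_subgroup_add)

lemma add_subgroup_int_mult:
  fixes G :: "'a::ring_1 set"
  assumes "add_subgroup G" "x \<in> G"
  shows "of_int k * x \<in> G"
proof -
  have nat: "of_nat n * x \<in> G" for n
    by (induction n) (auto simp: add_subgroup_0[OF assms(1)] add_subgroup_add[OF assms(1)] assms(2) distrib_right)
  show ?thesis
  proof (cases "k \<ge> 0")
    case True
    then show ?thesis using nat[of "nat k"] by simp
  next
    case False
    then show ?thesis using add_subgroup_uminus[OF assms(1) nat[of "nat (- k)"]] by simp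
  qed
qed

lemma add_subgroup_scaleR_of_int:
  fixes G :: "'a::real_vector set"
  assumes "add_subgroup G" "x \<in> G"
  shows "of_int k *\<^sub>R x \<in> G"
proof -
  have nat: "of_nat n *\<^sub>R x \<in> G" for n
    by (induction n) (auto simp: add_subgroup_0[OF assms(1)] add_subgroup_add[OF assms(1)] assms(2) scaleR_add_left)
  show ?thesis
  proof (cases "k \<ge> 0")
    case True
    then show ?thesis using nat[of "nat k"] by simp
  next
    case False
    then show ?thesis using add_subgroup_uminus[OF assms(1) nat[of "nat (- k)"]] by simp
  qed
qed

lemma add_subgroup_int_comb: "add_subgroup G \<Longrightarrow> set bs \<subseteq> G \<Longrightarrow> int_comb bs c \<in> G"
  unfolding int_comb_def by (auto intro!: add_subgroup_sum add_subgroup_scaleR_of_int)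

lemma add_subgroup_range_int_comb: "add_subgroup (range (int_comb bs))"
proof -
  have "int_comb bs c + int_comb bs d = int_comb bs (\<lambda>i. c i + d i)"
    and "- int_comb bs c = int_comb bs (\<lambda>i. - c i)" for c d
    by (simp_all add: int_comb_def scaleR_add_left sum.distrib flip: sum_negf)
  moreover have "0 = int_comb bs (\<lambda>_. 0)" by (simp add: int_comb_def)
  ultimately show ?thesis unfolding add_subgroup_def by blast
qed

lemma int_comb_unit: "i < length bs \<Longrightarrow> int_comb bs (\<lambda>j. if j = i then 1 else 0) = bs ! i"
  using lin_comb_unit[of i bs] by (simp add: int_comb_eq_lin_comb if_distrib cong: if_cong)

lemma set_subset_range_int_comb: "set bs \<subseteq> range (int_comb bs)"
  by (auto simp: in_set_conv_nth) (metis int_comb_unit rangeI)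

lemma range_int_comb_subset_span: "range (int_comb bs) \<subseteq> span (set bs)"
  using lin_comb_in_span by (auto simp: int_comb_eq_lin_comb)

lemma span_range_int_comb: "span (range (int_comb bs)) = span (set bs)"
  by (metis range_int_comb_subset_span set_subset_range_int_comb span_eq span_superset subset_trans)

lemma int_comb_snoc: "int_comb (bs @ [b]) c = int_comb bs c + of_int (c (length bs)) *\<^sub>R b"
  by (simp add: int_comb_eq_lin_comb lin_comb_snoc)

lemma int_comb_snoc_update:
  "int_comb (bs @ [b]) (c(length bs := k)) = int_comb bs c + of_int k *\<^sub>R b"
proof -
  have "lin_comb bs (\<lambda>i. of_int ((c(length bs := k)) i)) = lin_comb bs (\<lambda>i. of_int (c i))"
    by (rule lin_comb_cong) auto
  then show ?thesis by (simp add: int_comb_eq_lin_comb lin_comb_snoc)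
qed

lemma int_add_subgroup_eq_multiples:
  fixes K :: "int set"
  assumes K: "add_subgroup K"
  obtains d where "d \<ge> 0" "K = {k. d dvd k}"
proof (cases "K \<subseteq> {0}")
  case True
  then have "K = {k. 0 dvd k}" using add_subgroup_0[OF K] by auto
  then show ?thesis using that by blast
next
  case False
  then obtain k where k: "k \<in> K" "k \<noteq> 0" by blast
  have "\<exists>n::nat. n > 0 \<and> int n \<in> K"
    using k add_subgroup_uminus[OF K k(1)] by (intro exI[of _ "nat \<bar>k\<bar>"]) (auto simp: abs_if)
  define d where "d = (LEAST n::nat. n > 0 \<and> int n \<in> K)"
  have d: "d > 0" "int d \<in> K"
    using LeastI_ex[OF \<open>\<exists>n::nat. n > 0 \<and> int n \<in> K\<close>] unfolding d_def by auto
  have "int d dvd k" if "k \<in> K" for k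
  proof -
    have "k mod int d = k - of_int (k div int d) * int d" by (simp add: minus_div_mult_eq_mod)
    then have "k mod int d \<in> K"
      using add_subgroup_diff[OF K that add_subgroup_int_mult[OF K d(2)]] by simp
    moreover have "0 \<le> k mod int d" "k mod int d < int d" using d(1) by auto
    ultimately have "k mod int d = 0"
      using not_less_Least[of "nat (k mod int d)" "\<lambda>n. n > 0 \<and> int n \<in> K"]
      unfolding d_def[symmetric] by fastforce
    then show ?thesis by (simp add: dvd_eq_mod_eq_0)
  qed
  moreover have "k \<in> K" if "int d dvd k" for k
    using that add_subgroup_int_mult[OF K d(2)] by (auto simp: mult.commute elim!: dvdE)
  ultimately have "K = {k. int d dvd k}" by blast
  then show ?thesis using that[of "int d"] by simp
qed

lemma add_subgroup_last_coefficients: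
  assumes G: "add_subgroup G"
  shows "add_subgroup {k. \<exists>c. int_comb bs c + of_int k *\<^sub>R b \<in> G}" (is "add_subgroup ?K")
  unfolding add_subgroup_def
proof (intro conjI ballI)
  have "int_comb bs (\<lambda>_. 0) + of_int 0 *\<^sub>R b = 0" by (simp add: int_comb_def)
  then show "0 \<in> ?K" using add_subgroup_0[OF G] by (metis (mono_tags) mem_Collect_eq)
next
  fix k k' assume "k \<in> ?K" "k' \<in> ?K"
  then obtain c c' where "int_comb bs c + of_int k *\<^sub>R b \<in> G" "int_comb bs c' + of_int k' *\<^sub>R b \<in> G"
    by blast
  from add_subgroup_add[OF G this]
  have "int_comb bs (\<lambda>i. c i + c' i) + of_int (k + k') *\<^sub>R b \<in> G"
    by (simp add: int_comb_eq_lin_comb lin_comb_add[symmetric] scaleR_add_left algebra_simps)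
  then show "k + k' \<in> ?K" by blast
next
  fix k assume "k \<in> ?K"
  then obtain c where "int_comb bs c + of_int k *\<^sub>R b \<in> G" by blast
  from add_subgroup_uminus[OF G this]
  have "int_comb bs (\<lambda>i. - c i) + of_int (- k) *\<^sub>R b \<in> G"
    by (simp add: int_comb_eq_lin_comb lin_comb_scaleR[of "-1", simplified])
  then show "- k \<in> ?K" by blast
qed

lemma independent_list_snoc_lattice_vector:
  assumes ind: "independent_list (bs @ [b])" and cs: "independent_list cs" "set cs \<subseteq> range (int_comb bs)"
    and "d \<noteq> 0"
  shows "independent_list (cs @ [int_comb bs c0 + of_int d *\<^sub>R b])"
proof (rule independent_list_snocI[OF cs(1)])
  fix u a assume ua: "lin_comb cs u + a *\<^sub>R (int_comb bs c0 + of_int d *\<^sub>R b) = 0"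
  have "span (set cs) \<subseteq> span (set bs)"
    using span_mono[OF cs(2)] unfolding span_range_int_comb .
  then obtain v where v: "lin_comb cs u = lin_comb bs v"
    using lin_comb_in_span span_set_lin_comb by blast
  have "lin_comb bs (\<lambda>i. v i + a * of_int (c0 i)) + (a * of_int d) *\<^sub>R b = 0"
    using ua unfolding v int_comb_eq_lin_comb
    by (simp add: lin_comb_add[symmetric] lin_comb_scaleR[symmetric] algebra_simps)
  then have "a * of_int d = 0" using independent_list_snocD(2)[OF ind] by blast
  then show "a = 0" using \<open>d \<noteq> 0\<close> by simp
qed

text \<open>The last coefficients of the elements of G form a subgroup d\<int> of \<int>; an element of G with
  last coefficient d, together with a basis of the part of G in the smaller lattice, is a basis of G.\<close>
lemma lattice_subgroup_basis_snoc:
  assumes ind: "independent_list (bs @ [b])"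
    and G: "add_subgroup G" "G \<subseteq> range (int_comb (bs @ [b]))"
    and cs: "independent_list cs" "G \<inter> range (int_comb bs) = range (int_comb cs)" "set cs \<subseteq> G"
  shows "\<exists>cs'. independent_list cs' \<and> G = range (int_comb cs') \<and> set cs' \<subseteq> G"
proof -
  have coords: "\<exists>c k. g = int_comb bs c + of_int k *\<^sub>R b" if "g \<in> G" for g
    using G(2) that int_comb_snoc by blast
  define K where "K = {k. \<exists>c. int_comb bs c + of_int k *\<^sub>R b \<in> G}"
  obtain d where d: "d \<ge> 0" "K = {k. d dvd k}"
    using int_add_subgroup_eq_multiples add_subgroup_last_coefficients[OF G(1)] unfolding K_def by blast
  have "k \<in> K" if "g = int_comb bs c + of_int k *\<^sub>R b" "g \<in> G" for g c k
    using that unfolding K_def by blast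
  then have last_dvd: "d dvd k" if "g = int_comb bs c + of_int k *\<^sub>R b" "g \<in> G" for g c k
    using that d(2) by blast
  show ?thesis
  proof (cases "d = 0")
    case True
    then have "G \<subseteq> range (int_comb bs)" using coords last_dvd by fastforce
    then show ?thesis using cs by blast
  next
    case False
    have "d \<in> K" using d by simp
    then obtain c0 where g0: "int_comb bs c0 + of_int d *\<^sub>R b \<in> G" unfolding K_def by blast
    define g0 where "g0 = int_comb bs c0 + of_int d *\<^sub>R b"
    have "G \<subseteq> range (int_comb (cs @ [g0]))"
    proof
      fix g assume "g \<in> G"
      then obtain c k where g: "g = int_comb bs c + of_int k *\<^sub>R b" using coords by blast
      then obtain q where q: "k = d * q" using last_dvd \<open>g \<in> G\<close> by blast
      have "g - of_int q *\<^sub>R g0 = int_comb bs (\<lambda>i. c i - q * c0 i)"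
        unfolding g g0_def q by (simp add: int_comb_eq_lin_comb lin_comb_scaleR lin_comb_diff[symmetric]
            algebra_simps)
      moreover have "g - of_int q *\<^sub>R g0 \<in> G"
        using g0 \<open>g \<in> G\<close> G(1) by (simp add: g0_def add_subgroup_diff add_subgroup_scaleR_of_int)
      ultimately obtain e where "g - of_int q *\<^sub>R g0 = int_comb cs e" using cs(2) by blast
      then have "g = int_comb (cs @ [g0]) (e(length cs := q))"
        by (simp add: int_comb_snoc_update algebra_simps)
      then show "g \<in> range (int_comb (cs @ [g0]))" by blast
    qed
    moreover have "set (cs @ [g0]) \<subseteq> G" using cs(3) g0 by (simp add: g0_def)
    moreover have "set cs \<subseteq> range (int_comb bs)" using cs(2) set_subset_range_int_comb[of cs] by blast
    then have "independent_list (cs @ [g0])"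
      unfolding g0_def using independent_list_snoc_lattice_vector[OF ind cs(1)] False by blast
    ultimately show ?thesis using add_subgroup_int_comb[OF G(1)] by blast
  qed
qed

lemma lattice_subgroup_basis:
  assumes "independent_list bs" "add_subgroup G" "G \<subseteq> range (int_comb bs)"
  shows "\<exists>cs. independent_list cs \<and> G = range (int_comb cs) \<and> set cs \<subseteq> G"
  using assms
proof (induction bs arbitrary: G rule: rev_induct)
  case Nil
  then have "G = {0}" using add_subgroup_0 by (fastforce simp: int_comb_def)
  moreover have "range (int_comb []) = {0}" "independent_list []"
    by (auto simp: int_comb_def independent_list_def)
  ultimately show ?case by fastforce
next
  case (snoc b bs)
  have "add_subgroup (G \<inter> range (int_comb bs))"
    using snoc.prems(2) add_subgroup_range_int_comb[of bs] unfolding add_subgroup_def by blast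
  with snoc.IH obtain cs where "independent_list cs" "G \<inter> range (int_comb bs) = range (int_comb cs)"
      "set cs \<subseteq> G"
    using independent_list_snocD(1)[OF snoc.prems(1)] by blast
  then show ?case using lattice_subgroup_basis_snoc snoc.prems by blast
qed

section \<open>Discrete subgroups are lattices\<close>

lemma discrete_add_subgroup_uniform_discrete:
  fixes G :: "'a::real_normed_vector set"
  assumes G: "add_subgroup G" "discrete G"
  shows "uniform_discrete G"
proof -
  have "0 isolated_in G" using discreteD[OF G(2) add_subgroup_0[OF G(1)]] .
  then obtain T where T: "open T" "T \<inter> G = {0}" unfolding isolated_in_def by blast
  then obtain e where e: "e > 0" "ball 0 e \<subseteq> T" using open_contains_ball by blast
  show ?thesis
  proof (rule uniformI1[OF e(1)])
    fix x y assume "x \<in> G" "y \<in> G" "dist x y < e"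
    then have "x - y \<in> T \<inter> G"
      using e(2) add_subgroup_diff[OF G(1)] by (auto simp: dist_norm norm_minus_commute)
    then show "x = y" using T by auto
  qed
qed

lemma discrete_subgroup_fundamental_domain_finite:
  fixes G :: "'a::euclidean_space set"
  assumes "add_subgroup G" "discrete G"
  shows "finite {x\<in>G. \<exists>t. x = lin_comb bs t \<and> (\<forall>i<length bs. 0 \<le> t i \<and> t i < 1)}"
    (is "finite ?P")
proof -
  have "norm x \<le> (\<Sum>i<length bs. norm (bs ! i))" if x: "x \<in> ?P" for x
  proof -
    obtain t where t: "x = lin_comb bs t" "\<forall>i<length bs. 0 \<le> t i \<and> t i < 1"
      using x by blast
    have "norm (t i *\<^sub>R bs ! i) \<le> norm (bs ! i)" if "i < length bs" for i
      using t(2) that by (simp add: less_imp_le mult_left_le_one_le)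
    then show ?thesis
      unfolding t(1) lin_comb_def by (intro order_trans[OF norm_sum sum_mono]) auto
  qed
  then have "bounded ?P" unfolding bounded_iff by blast
  moreover have "uniform_discrete ?P"
    using discrete_add_subgroup_uniform_discrete[OF assms] by (rule uniform_discrete_subset) blast
  ultimately show ?thesis using uniform_discrete_finite_iff by blast
qed

text \<open>Two of the multiples 0, x, \<dots>, N x have the same fractional coordinates, as only N points of G
  lie in the half-open parallelepiped spanned by bs.\<close>
lemma discrete_subgroup_multiple_in_lattice:
  fixes G :: "'a::euclidean_space set"
  assumes G: "add_subgroup G" "discrete G" and bs: "set bs \<subseteq> G" "G \<subseteq> span (set bs)"
    and x: "x \<in> G"
  defines "N \<equiv> card {x\<in>G. \<exists>t. x = lin_comb bs t \<and> (\<forall>i<length bs. 0 \<le> t i \<and> t i < 1)}"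
  shows "\<exists>m. 1 \<le> m \<and> m \<le> N \<and> of_nat m *\<^sub>R x \<in> range (int_comb bs)"
proof -
  let ?P = "{x\<in>G. \<exists>t. x = lin_comb bs t \<and> (\<forall>i<length bs. 0 \<le> t i \<and> t i < 1)}"
  obtain a where a: "x = lin_comb bs a" using x bs(2) span_set_lin_comb by blast
  define fl where "fl j i = \<lfloor>of_nat j * a i\<rfloor>" for j :: nat and i
  define p where "p j = lin_comb bs (\<lambda>i. frac (of_nat j * a i))" for j :: nat
  have p_eq: "p j = of_nat j *\<^sub>R x - int_comb bs (fl j)" for j
    unfolding p_def a int_comb_eq_lin_comb fl_def frac_def lin_comb_scaleR lin_comb_diff by simp
  have "p j \<in> G" for j
    unfolding p_eq using add_subgroup_scaleR_of_int[OF G(1) x, of "int j"]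
    by (simp add: add_subgroup_diff[OF G(1)] add_subgroup_int_comb[OF G(1) bs(1)])
  then have "p j \<in> ?P" for j
    by (auto simp: p_def frac_lt_1 intro!: exI[of _ "\<lambda>i. frac (of_nat j * a i)"])
  then have "\<not> inj_on p {0..N}"
    using card_inj_on_le[of p "{0..N}" ?P] discrete_subgroup_fundamental_domain_finite[OF G]
    unfolding N_def by fastforce
  then obtain j1 j2 where j: "j1 \<le> N" "j2 \<le> N" "j1 < j2" "p j1 = p j2"
    unfolding inj_on_def by (metis atLeastAtMost_iff linorder_neqE_nat)
  have "of_nat (j2 - j1) *\<^sub>R x = int_comb bs (\<lambda>i. fl j2 i - fl j1 i)"
    using j(3,4) unfolding p_eq int_comb_eq_lin_comb
    by (simp add: of_nat_diff scaleR_diff_left lin_comb_diff[symmetric] algebra_simps)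
  then have "of_nat (j2 - j1) *\<^sub>R x \<in> range (int_comb bs)" by (metis rangeI)
  moreover have "1 \<le> j2 - j1" "j2 - j1 \<le> N" using j by auto
  ultimately show ?thesis by blast
qed

lemma discrete_subgroup_basis:
  fixes G :: "'a::euclidean_space set"
  assumes G: "add_subgroup G" "discrete G"
  shows "\<exists>bs. independent_list bs \<and> G = range (int_comb bs) \<and> set bs \<subseteq> G"
proof -
  obtain S where S: "S \<subseteq> G" "independent S" "G \<subseteq> span S"
    using maximal_independent_subset by blast
  obtain bs where bs: "set bs = S" "distinct bs"
    using finite_distinct_list[OF finiteI_independent[OF S(2)]] by blast
  have bs_G: "set bs \<subseteq> G" "G \<subseteq> span (set bs)" using S bs(1) by auto
  define N where "N = card {x\<in>G. \<exists>t. x = lin_comb bs t \<and> (\<forall>i<length bs. 0 \<le> t i \<and> t i < 1)}"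
  have N: "of_nat (fact N) *\<^sub>R x \<in> range (int_comb bs)" if x: "x \<in> G" for x
  proof -
    obtain m where m: "1 \<le> m" "m \<le> N" "of_nat m *\<^sub>R x \<in> range (int_comb bs)"
      using discrete_subgroup_multiple_in_lattice[OF G bs_G x, folded N_def] by blast
    obtain q where "fact N = m * q" using dvd_fact[OF m(1,2)] by blast
    then have eq: "of_nat (fact N) *\<^sub>R x = of_int (int q) *\<^sub>R (of_nat m *\<^sub>R x)" by simp
    show ?thesis unfolding eq by (rule add_subgroup_scaleR_of_int[OF add_subgroup_range_int_comb m(3)])
  qed
  define bs' where "bs' = map (\<lambda>b. inverse (fact N) *\<^sub>R b) bs"
  have scale: "lin_comb bs' c = inverse (fact N) *\<^sub>R lin_comb bs c" for c
    unfolding bs'_def lin_comb_def by (simp add: scaleR_sum_right mult.commute)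
  have "independent_list bs"
    using bs S(2) by (simp add: independent_list_iff)
  then have bs': "independent_list bs'"
    unfolding independent_list_def scale by (simp add: bs'_def)
  have G_sub: "G \<subseteq> range (int_comb bs')"
  proof
    fix x assume "x \<in> G"
    then obtain c where "of_nat (fact N) *\<^sub>R x = int_comb bs c" using N by blast
    then have "x = inverse (fact N) *\<^sub>R int_comb bs c" by (simp flip: \<open>_ = int_comb bs c\<close>)
    then have "x = int_comb bs' c" by (simp add: int_comb_eq_lin_comb scale)
    then show "x \<in> range (int_comb bs')" by blast
  qed
  show ?thesis using lattice_subgroup_basis[OF bs' G(1) G_sub] .
qed

section \<open>Nondegenerate bilinear forms\<close>

definition biorthogonal :: "('a \<Rightarrow> 'b \<Rightarrow> real) \<Rightarrow> 'a list \<Rightarrow> 'b list \<Rightarrow> bool" where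
  "biorthogonal B bs cs \<longleftrightarrow> length bs = length cs \<and>
     (\<forall>i<length bs. \<forall>j<length cs. B (bs ! i) (cs ! j) = (if i = j then 1 else 0))"

lemma biorthogonal_lin_comb:
  fixes B :: "'a::real_vector \<Rightarrow> 'b::real_vector \<Rightarrow> real"
  assumes "bilinear B" "biorthogonal B bs cs" "j < length cs"
  shows "B (lin_comb bs c) (cs ! j) = c j"
proof (rule bilinear_lin_comb_left_unit[OF assms(1)])
  show "j < length bs" using assms(2,3) by (simp add: biorthogonal_def)
  show "B (bs ! i) (cs ! j) = (if i = j then 1 else 0)" if "i < length bs" for i
    using assms(2,3) that unfolding biorthogonal_def by blast
qed

lemma biorthogonal_int_comb:
  fixes B :: "'a::real_vector \<Rightarrow> 'b::real_vector \<Rightarrow> real"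
  assumes "bilinear B" "biorthogonal B bs cs" "j < length cs"
  shows "B (int_comb bs k) (cs ! j) = of_int (k j)"
  using biorthogonal_lin_comb[OF assms] by (simp add: int_comb_eq_lin_comb)

lemma biorthogonal_fg_free_subgroup:
  fixes B :: "'a::real_vector \<Rightarrow> 'b::real_vector \<Rightarrow> real"
  assumes "bilinear B" "biorthogonal B bs cs"
  shows "fg_free_subgroup (range (int_comb bs))"
  unfolding fg_free_subgroup_def
proof (intro exI conjI allI impI)
  fix k i assume "int_comb bs k = 0" "i < length bs"
  then show "k i = 0"
    using biorthogonal_int_comb[OF assms, of i k] assms(2)
    by (simp add: biorthogonal_def bilinear_lzero[OF assms(1)])
qed simp

lemma biorthogonal_append:
  assumes "biorthogonal B bs cs" "biorthogonal B bs' cs'"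
    and "\<And>i j. i < length bs \<Longrightarrow> j < length cs' \<Longrightarrow> B (bs ! i) (cs' ! j) = 0"
    and "\<And>i j. i < length bs' \<Longrightarrow> j < length cs \<Longrightarrow> B (bs' ! i) (cs ! j) = 0"
  shows "biorthogonal B (bs @ bs') (cs @ cs')"
  using assms unfolding biorthogonal_def by (auto simp: nth_append)

lemma nondegenerate_bilinear_represents:
  fixes B :: "'h::euclidean_space \<Rightarrow> 'h \<Rightarrow> real"
  assumes bil: "bilinear B" and nondeg: "\<And>x. (\<forall>y. B x y = 0) \<Longrightarrow> x = 0" and g: "linear g"
  shows "\<exists>y. \<forall>x. B y x = g x"
proof -
  define M where "M y = (\<Sum>b\<in>Basis. B y b *\<^sub>R b)" for y
  have B_eq: "B y x = M y \<bullet> x" for y x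
  proof -
    have lin: "linear (B y)" using bil by (simp add: bilinear_def)
    have "B y x = B y (\<Sum>b\<in>Basis. (x \<bullet> b) *\<^sub>R b)" by (simp add: euclidean_representation)
    also have "\<dots> = (\<Sum>b\<in>Basis. (x \<bullet> b) * B y b)"
      by (simp add: linear_sum[OF lin] linear_scale[OF lin])
    also have "\<dots> = M y \<bullet> x"
      unfolding M_def inner_sum_left by (simp add: inner_commute mult.commute)
    finally show ?thesis .
  qed
  have "linear M"
    unfolding linear_iff M_def
    by (simp add: bilinear_ladd[OF bil] bilinear_lmul[OF bil] scaleR_add_left sum.distrib
        scaleR_sum_right)
  moreover have "inj M"
  proof (rule injI)
    fix y z assume "M y = M z"
    then have "B y x = B z x" for x by (simp add: B_eq)
    then have "\<forall>x. B (y - z) x = 0" by (simp add: bilinear_lsub[OF bil])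
    then show "y = z" using nondeg by fastforce
  qed
  ultimately obtain y where "M y = adjoint g 1"
    using linear_injective_imp_surjective by (metis surjD)
  moreover have "g x = adjoint g 1 \<bullet> x" for x
    using adjoint_works[OF g, of x 1] by (simp add: inner_commute)
  ultimately show ?thesis using B_eq by metis
qed

lemma nondegenerate_bilinear_prescribed_pairings:
  fixes B :: "'h::euclidean_space \<Rightarrow> 'h \<Rightarrow> real"
  assumes "bilinear B" "\<And>x. (\<forall>y. B x y = 0) \<Longrightarrow> x = 0" and cs: "independent_list cs"
  shows "\<exists>y. \<forall>j<length cs. B y (cs ! j) = t j"
proof -
  have dist: "distinct cs" and ind: "independent (set cs)" using cs by (simp_all add: independent_list_iff)
  obtain g :: "'h \<Rightarrow> real"
    where g: "linear g" "\<forall>x\<in>set cs. g x = t (THE j. j < length cs \<and> cs ! j = x)"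
    using linear_independent_extend[OF ind, of "\<lambda>x. t (THE j. j < length cs \<and> cs ! j = x)"] by blast
  have "g (cs ! j) = t j" if "j < length cs" for j
  proof -
    have "(THE i. i < length cs \<and> cs ! i = cs ! j) = j"
      using that dist by (auto intro!: the_equality simp: nth_eq_iff_index_eq)
    then show ?thesis using g(2) that by simp
  qed
  then show ?thesis using nondegenerate_bilinear_represents[OF assms(1,2) g(1)] by metis
qed

lemma nondegenerate_bilinear_dual_vectors:
  fixes B :: "'h::euclidean_space \<Rightarrow> 'h \<Rightarrow> real"
  assumes "bilinear B" "\<And>x. (\<forall>y. B x y = 0) \<Longrightarrow> x = 0" and cs: "independent_list cs"
  obtains e where "\<And>i j. j < length cs \<Longrightarrow> B (e i) (cs ! j) = (if i = j then 1 else 0)"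
proof -
  have "\<exists>y. \<forall>j<length cs. B y (cs ! j) = (if i = j then 1 else 0)" for i
    using nondegenerate_bilinear_prescribed_pairings[OF assms, where t = "\<lambda>j. if i = j then 1 else 0"] .
  then obtain e where "\<forall>i. \<forall>j<length cs. B (e i) (cs ! j) = (if i = j then 1 else 0)"
    by (metis choice)
  then show ?thesis using that by blast
qed

lemma linear_inj_on_subspace_imp_surj_on:
  fixes f :: "'a::euclidean_space \<Rightarrow> 'a"
  assumes "linear f" "subspace S" "f ` S \<subseteq> S" "inj_on f S"
  shows "f ` S = S"
proof -
  have "dim (f ` S) = dim S"
    using dim_image_eq[OF assms(1)] assms(2,4) span_eq_iff by metis
  then show ?thesis
    using subspace_dim_equal[OF linear_subspace_image[OF assms(1,2)] assms(2,3)] by simp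
qed

lemma dual_basis_in_span:
  fixes B :: "'h::euclidean_space \<Rightarrow> 'h \<Rightarrow> real"
  assumes bil: "bilinear B" and ss: "independent_list ss"
    and nondeg: "\<And>w. w \<in> span (set ss) \<Longrightarrow> (\<forall>j<length ss. B w (ss ! j) = 0) \<Longrightarrow> w = 0"
  shows "\<exists>ds. biorthogonal B ds ss \<and> set ds \<subseteq> span (set ss)"
proof -
  define \<Psi> where "\<Psi> y = lin_comb ss (\<lambda>j. B y (ss ! j))" for y
  have lin: "linear \<Psi>"
    unfolding linear_iff \<Psi>_def
    by (simp add: bilinear_ladd[OF bil] bilinear_lmul[OF bil] lin_comb_add lin_comb_scaleR)
  have "inj_on \<Psi> (span (set ss))"
  proof (rule inj_onI)
    fix y z assume yz: "y \<in> span (set ss)" "z \<in> span (set ss)" "\<Psi> y = \<Psi> z"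
    then have "\<forall>j<length ss. B (y - z) (ss ! j) = 0"
      using ss linear_diff[OF lin] unfolding \<Psi>_def independent_list_def by (metis right_minus_eq)
    then have "y - z = 0" using nondeg span_diff[OF yz(1,2)] by blast
    then show "y = z" by simp
  qed
  then have "\<Psi> ` span (set ss) = span (set ss)"
    by (intro linear_inj_on_subspace_imp_surj_on[OF lin]) (auto simp: \<Psi>_def lin_comb_in_span)
  then have "\<forall>i<length ss. \<exists>y \<in> span (set ss). \<Psi> y = ss ! i"
    by (metis imageE nth_mem span_base)
  then obtain d where d: "\<And>i. i < length ss \<Longrightarrow> d i \<in> span (set ss) \<and> \<Psi> (d i) = ss ! i"
    by metis
  have "B (d i) (ss ! j) = (if i = j then 1 else 0)" if "i < length ss" "j < length ss" for i j
  proof -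
    have "lin_comb ss (\<lambda>j. B (d i) (ss ! j)) = lin_comb ss (\<lambda>j. if j = i then 1 else 0)"
      using d[OF that(1)] lin_comb_unit[OF that(1)] unfolding \<Psi>_def by simp
    from independent_list_coeff_eq[OF ss this that(2)] show ?thesis by simp
  qed
  then show ?thesis using d by (intro exI[of _ "map d [0..<length ss]"]) (auto simp: biorthogonal_def)
qed

lemma length_2_conv_nth: "length xs = 2 \<Longrightarrow> xs = [xs ! 0, xs ! 1]"
  by (auto simp: numeral_eq_Suc length_Suc_conv)

lemma length_4_conv_nth: "length xs = 4 \<Longrightarrow> xs = [xs ! 0, xs ! 1, xs ! 2, xs ! 3]"
  by (auto simp: numeral_eq_Suc length_Suc_conv)

lemma internal_dsum_2I:
  fixes A1 A2 C :: "'a::ab_group_add set"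
  assumes closed: "\<And>a b. a \<in> A1 \<Longrightarrow> b \<in> A2 \<Longrightarrow> a + b \<in> C"
    and exists: "\<And>x. x \<in> C \<Longrightarrow> \<exists>a b. a \<in> A1 \<and> b \<in> A2 \<and> a + b = x"
    and unique: "\<And>a b a' b'. a \<in> A1 \<Longrightarrow> b \<in> A2 \<Longrightarrow> a' \<in> A1 \<Longrightarrow> b' \<in> A2 \<Longrightarrow>
                   a + b = a' + b' \<Longrightarrow> a = a' \<and> b = b'"
  shows "internal_dsum [A1, A2] C"
proof -
  have members: "length xs = length [A1, A2] \<and> (\<forall>i<length [A1, A2]. xs ! i \<in> [A1, A2] ! i)
      \<longleftrightarrow> (\<exists>a b. xs = [a, b] \<and> a \<in> A1 \<and> b \<in> A2)" for xs :: "'a list"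
  proof
    assume "length xs = length [A1, A2] \<and> (\<forall>i<length [A1, A2]. xs ! i \<in> [A1, A2] ! i)"
    then have "\<And>i. i < 2 \<Longrightarrow> xs ! i \<in> [A1, A2] ! i" by simp
    from this[of 0] this[of 1] have "xs ! 0 \<in> A1" "xs ! 1 \<in> A2" by simp_all
    then show "\<exists>a b. xs = [a, b] \<and> a \<in> A1 \<and> b \<in> A2"
      using length_2_conv_nth[of xs] \<open>length xs = length [A1, A2] \<and> _\<close> by auto
  qed (auto simp: less_Suc_eq nth_Cons')
  show ?thesis
    unfolding internal_dsum_def conj_assoc[symmetric] unfolding members
  proof (intro conjI allI impI ballI)
    show "sum_list xs \<in> C" if "\<exists>a b. xs = [a, b] \<and> a \<in> A1 \<and> b \<in> A2" for xs
      using that closed by auto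
    fix x assume "x \<in> C"
    then obtain a b where ab: "a \<in> A1" "b \<in> A2" "a + b = x" using exists by blast
    show "\<exists>!xs. (\<exists>a b. xs = [a, b] \<and> a \<in> A1 \<and> b \<in> A2) \<and> sum_list xs = x"
      using ab unique by (intro ex1I[of _ "[a, b]"]) auto
  qed
qed

lemma internal_dsum_4I:
  fixes A1 A2 A3 A4 C :: "'a::ab_group_add set"
  assumes closed: "\<And>a b c d. a \<in> A1 \<Longrightarrow> b \<in> A2 \<Longrightarrow> c \<in> A3 \<Longrightarrow> d \<in> A4 \<Longrightarrow> a + b + c + d \<in> C"
    and exists: "\<And>x. x \<in> C \<Longrightarrow> \<exists>a b c d. a \<in> A1 \<and> b \<in> A2 \<and> c \<in> A3 \<and> d \<in> A4 \<and> a + b + c + d = x"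
    and unique: "\<And>a b c d a' b' c' d'. a \<in> A1 \<Longrightarrow> b \<in> A2 \<Longrightarrow> c \<in> A3 \<Longrightarrow> d \<in> A4 \<Longrightarrow>
                   a' \<in> A1 \<Longrightarrow> b' \<in> A2 \<Longrightarrow> c' \<in> A3 \<Longrightarrow> d' \<in> A4 \<Longrightarrow>
                   a + b + c + d = a' + b' + c' + d' \<Longrightarrow> a = a' \<and> b = b' \<and> c = c' \<and> d = d'"
  shows "internal_dsum [A1, A2, A3, A4] C"
proof -
  let ?Ss = "[A1, A2, A3, A4]"
  have members: "length xs = length ?Ss \<and> (\<forall>i<length ?Ss. xs ! i \<in> ?Ss ! i)
      \<longleftrightarrow> (\<exists>a b c d. xs = [a, b, c, d] \<and> a \<in> A1 \<and> b \<in> A2 \<and> c \<in> A3 \<and> d \<in> A4)" for xs :: "'a list"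
  proof
    assume *: "length xs = length ?Ss \<and> (\<forall>i<length ?Ss. xs ! i \<in> ?Ss ! i)"
    then have "\<And>i. i < 4 \<Longrightarrow> xs ! i \<in> ?Ss ! i" by simp
    from this[of 0] this[of 1] this[of 2] this[of 3]
    have "xs ! 0 \<in> A1" "xs ! 1 \<in> A2" "xs ! 2 \<in> A3" "xs ! 3 \<in> A4" by simp_all
    then show "\<exists>a b c d. xs = [a, b, c, d] \<and> a \<in> A1 \<and> b \<in> A2 \<and> c \<in> A3 \<and> d \<in> A4"
      using length_4_conv_nth[of xs] * by auto
  qed (auto simp: less_Suc_eq nth_Cons' numeral_eq_Suc)
  have sum_4: "sum_list [a, b, c, d] = a + b + c + d" for a b c d :: 'a
    by (simp add: add.assoc)
  show ?thesis
    unfolding internal_dsum_def conj_assoc[symmetric] unfolding members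
  proof (intro conjI allI impI ballI)
    show "sum_list xs \<in> C"
      if "\<exists>a b c d. xs = [a, b, c, d] \<and> a \<in> A1 \<and> b \<in> A2 \<and> c \<in> A3 \<and> d \<in> A4" for xs
      using that closed by (auto simp: add.assoc)
    fix x assume "x \<in> C"
    then obtain a b c d where abcd: "a \<in> A1" "b \<in> A2" "c \<in> A3" "d \<in> A4" "a + b + c + d = x"
      using exists by blast
    show "\<exists>!xs. (\<exists>a b c d. xs = [a, b, c, d] \<and> a \<in> A1 \<and> b \<in> A2 \<and> c \<in> A3 \<and> d \<in> A4) \<and>
        sum_list xs = x"
    proof (rule ex1I[of _ "[a, b, c, d]"])
      fix ys assume "(\<exists>a b c d. ys = [a, b, c, d] \<and> a \<in> A1 \<and> b \<in> A2 \<and> c \<in> A3 \<and> d \<in> A4) \<and>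
        sum_list ys = x"
      then obtain a' b' c' d' where ys: "ys = [a', b', c', d']" "a' \<in> A1" "b' \<in> A2" "c' \<in> A3" "d' \<in> A4"
        "a' + b' + c' + d' = x"
        using sum_4 by auto
      then show "ys = [a, b, c, d]" using unique[OF ys(2-5) abcd(1-4)] abcd(5) by simp
    qed (use abcd sum_4 in auto)
  qed
qed

section \<open>Frames adapted to a lattice\<close>

lemma bilinear_orthogonal_span:
  assumes "bilinear B" "\<And>y. y \<in> S \<Longrightarrow> B x y = 0" "y \<in> span S"
  shows "B x y = 0"
proof -
  have "linear (B x)" using assms(1) by (simp add: bilinear_def)
  from linear_eq_0_on_span[OF this assms(2,3)] show ?thesis .
qed

lemma subspace_orthogonal_complement:
  assumes "bilinear B"
  shows "subspace {v. \<forall>y\<in>S. B v y = 0}"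
  unfolding subspace_def
  by (simp add: bilinear_lzero[OF assms] bilinear_ladd[OF assms] bilinear_lmul[OF assms])

lemma of_int_floor_Ints: "x \<in> \<int> \<Longrightarrow> of_int \<lfloor>x\<rfloor> = x"
  by (metis Ints_cases floor_of_int)

lemma lin_comb_Ints_eq_int_comb:
  assumes "\<And>j. j < length bs \<Longrightarrow> c j \<in> \<int>"
  shows "lin_comb bs c = int_comb bs (\<lambda>j. \<lfloor>c j\<rfloor>)"
  unfolding int_comb_eq_lin_comb using assms by (intro lin_comb_cong) (simp add: of_int_floor_Ints)

lemma dual_lattice_add:
  assumes "bilinear B" "x \<in> dual_lattice B L" "y \<in> dual_lattice B L"
  shows "x + y \<in> dual_lattice B L"
  using assms by (simp add: dual_lattice_def bilinear_ladd Ints_add)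

lemma perp_space_subset_dual_lattice: "perp_space B L \<subseteq> dual_lattice B L"
  by (auto simp: perp_space_def dual_lattice_def)

lemma biorthogonal_swap:
  "(\<And>x y. B x y = B y x) \<Longrightarrow> biorthogonal B bs cs \<Longrightarrow> biorthogonal B cs bs"
  by (auto simp: biorthogonal_def)

lemma nth_append_cases:
  assumes "j < length (xs @ ys)" "j < length xs \<Longrightarrow> P (xs ! j)" "\<And>i. i < length ys \<Longrightarrow> P (ys ! i)"
  shows "P ((xs @ ys) ! j)"
  using assms by (cases "j < length xs") (auto simp: nth_append)

locale lattice_frame =
  fixes B :: "'h::euclidean_space \<Rightarrow> 'h \<Rightarrow> real" and L :: "'h set"
    and rs ss fs ds :: "'h list"
  assumes bil: "bilinear B"
    and sym: "\<And>x y. B x y = B y x"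
    and nondeg: "\<And>x. (\<forall>y. B x y = 0) \<Longrightarrow> x = 0"
    and radical_eq: "radical B L = range (int_comb rs)"
    and ss_L: "set ss \<subseteq> L"
    and L_sub: "L \<subseteq> range (int_comb (rs @ ss))"
    and fs_rs: "biorthogonal B fs rs"
    and fs_ss: "\<And>i j. i < length fs \<Longrightarrow> j < length ss \<Longrightarrow> B (fs ! i) (ss ! j) = 0"
    and fs_fs: "\<And>i j. i < length fs \<Longrightarrow> j < length fs \<Longrightarrow> B (fs ! i) (fs ! j) = 0"
    and ds_ss: "biorthogonal B ds ss"
    and ds_span: "set ds \<subseteq> span (set ss)"
begin

abbreviation F :: "'h set" where "F \<equiv> range (int_comb fs)"
abbreviation D :: "'h set" where "D \<equiv> range (int_comb ds)"
abbreviation \<Gamma> :: "'h set" where "\<Gamma> \<equiv> range (int_comb (fs @ ds))"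

lemma length_fs: "length fs = length rs" and length_ds: "length ds = length ss"
  using fs_rs ds_ss by (simp_all add: biorthogonal_def)

lemma rs_radical: "i < length rs \<Longrightarrow> rs ! i \<in> radical B L"
  using radical_eq set_subset_range_int_comb nth_mem by blast

lemma rs_L: "set rs \<subseteq> L"
  using rs_radical by (auto simp: radical_def in_set_conv_nth)

lemma rs_orthogonal_span:
  assumes "i < length rs" "y \<in> span L"
  shows "B (rs ! i) y = 0"
proof (rule bilinear_orthogonal_span[OF bil _ assms(2)])
  show "B (rs ! i) a = 0" if "a \<in> L" for a
    using rs_radical[OF assms(1)] that by (simp add: radical_def)
qed

lemma fs_orthogonal_span_ss:
  assumes "i < length fs" "y \<in> span (set ss)"
  shows "B (fs ! i) y = 0"
proof (rule bilinear_orthogonal_span[OF bil _ assms(2)])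
  show "B (fs ! i) a = 0" if "a \<in> set ss" for a
    using fs_ss[OF assms(1)] that by (metis in_set_conv_nth)
qed

lemma span_ss_subset: "span (set ss) \<subseteq> span L"
  using ss_L span_mono by blast

lemma span_radical: "span (radical B L) = span (set rs)"
  using radical_eq span_range_int_comb by simp

lemma ds_rs:
  assumes "i < length ds" "j < length rs"
  shows "B (ds ! i) (rs ! j) = 0"
proof -
  have "ds ! i \<in> span L" using ds_span span_ss_subset nth_mem[OF assms(1)] by blast
  then show ?thesis using rs_orthogonal_span[OF assms(2)] sym by metis
qed

lemma ds_fs:
  assumes "i < length ds" "j < length fs"
  shows "B (ds ! i) (fs ! j) = 0"
proof -
  have "ds ! i \<in> span (set ss)" using ds_span nth_mem[OF assms(1)] by blast
  then show ?thesis using fs_orthogonal_span_ss[OF assms(2)] sym by metis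
qed

lemma rs_ss:
  assumes "i < length rs" "j < length ss"
  shows "B (rs ! i) (ss ! j) = 0"
proof -
  have "ss ! j \<in> span L" using ss_L nth_mem[OF assms(2)] span_base by blast
  then show ?thesis using rs_orthogonal_span[OF assms(1)] by blast
qed

lemma rs_span_orthogonal:
  assumes "i < length rs" "y \<in> span (set rs)"
  shows "B (rs ! i) y = 0"
proof -
  have "y \<in> span L" using assms(2) rs_L span_mono by blast
  then show ?thesis using rs_orthogonal_span[OF assms(1)] by blast
qed

lemma Gamma_biorthogonal: "biorthogonal B (fs @ ds) (rs @ ss)"
  using biorthogonal_append[OF fs_rs ds_ss fs_ss ds_rs] .

lemma rs_ss_L: "j < length (rs @ ss) \<Longrightarrow> (rs @ ss) ! j \<in> L"
  using rs_L ss_L nth_mem[of j "rs @ ss"] by auto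

lemma pairing_L_eq_sum:
  assumes "a \<in> L"
  obtains c where "B x a = (\<Sum>j<length (rs @ ss). of_int (c j) * B x ((rs @ ss) ! j))"
proof -
  obtain c where "a = int_comb (rs @ ss) c" using L_sub assms by blast
  then show ?thesis
    using that[of c] by (simp add: int_comb_eq_lin_comb bilinear_lin_comb_right[OF bil])
qed

lemma dual_lattice_iff: "x \<in> dual_lattice B L \<longleftrightarrow> (\<forall>j<length (rs @ ss). B x ((rs @ ss) ! j) \<in> \<int>)"
proof
  show "x \<in> dual_lattice B L" if "\<forall>j<length (rs @ ss). B x ((rs @ ss) ! j) \<in> \<int>"
    unfolding dual_lattice_def
  proof (intro CollectI ballI)
    fix a assume "a \<in> L"
    then obtain c where "B x a = (\<Sum>j<length (rs @ ss). of_int (c j) * B x ((rs @ ss) ! j))"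
      by (rule pairing_L_eq_sum)
    then show "B x a \<in> \<int>" using that by (auto intro!: Ints_sum Ints_mult)
  qed
qed (use rs_ss_L in \<open>auto simp: dual_lattice_def\<close>)

lemma perp_space_iff: "x \<in> perp_space B L \<longleftrightarrow> (\<forall>j<length (rs @ ss). B x ((rs @ ss) ! j) = 0)"
proof
  show "x \<in> perp_space B L" if "\<forall>j<length (rs @ ss). B x ((rs @ ss) ! j) = 0"
    unfolding perp_space_def
  proof (intro CollectI ballI)
    fix a assume "a \<in> L"
    then obtain c where "B x a = (\<Sum>j<length (rs @ ss). of_int (c j) * B x ((rs @ ss) ! j))"
      by (rule pairing_L_eq_sum)
    then show "B x a = 0" using that by simp
  qed
qed (use rs_ss_L in \<open>auto simp: perp_space_def\<close>)

lemma Gamma_pairing: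
  "j < length (rs @ ss) \<Longrightarrow> B (int_comb (fs @ ds) k) ((rs @ ss) ! j) = of_int (k j)"
  by (rule biorthogonal_int_comb[OF bil Gamma_biorthogonal])

lemma Gamma_subset_dual_lattice: "\<Gamma> \<subseteq> dual_lattice B L"
proof
  fix g assume "g \<in> \<Gamma>"
  then obtain k where g: "g = int_comb (fs @ ds) k" by blast
  show "g \<in> dual_lattice B L"
    unfolding dual_lattice_iff g using Gamma_pairing by (metis Ints_of_int)
qed

lemma perp_space_Gamma_internal_dsum:
  "internal_dsum [perp_space B L, \<Gamma>] (dual_lattice B L)"
proof (rule internal_dsum_2I)
  fix w g assume "w \<in> perp_space B L" "g \<in> \<Gamma>"
  then have "w \<in> dual_lattice B L" "g \<in> dual_lattice B L"
    using perp_space_subset_dual_lattice[of B L] Gamma_subset_dual_lattice by blast+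
  then show "w + g \<in> dual_lattice B L" by (rule dual_lattice_add[OF bil])
next
  fix x assume x: "x \<in> dual_lattice B L"
  define g where "g = int_comb (fs @ ds) (\<lambda>j. \<lfloor>B x ((rs @ ss) ! j)\<rfloor>)"
  have "x - g \<in> perp_space B L"
    using x by (simp add: perp_space_iff dual_lattice_iff g_def Gamma_pairing of_int_floor_Ints
        bilinear_lsub[OF bil])
  then show "\<exists>w g. w \<in> perp_space B L \<and> g \<in> \<Gamma> \<and> w + g = x"
    by (intro exI[of _ "x - g"] exI[of _ g]) (auto simp: g_def)
next
  fix w g w' g'
  assume w: "w \<in> perp_space B L" "w' \<in> perp_space B L"
    and g: "g \<in> \<Gamma>" "g' \<in> \<Gamma>"
    and eq: "w + g = w' + g'"
  obtain k k' where k: "g = int_comb (fs @ ds) k" "g' = int_comb (fs @ ds) k'" using g by blast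
  have "of_int (k j) = (of_int (k' j) :: real)" if "j < length (fs @ ds)" for j
  proof -
    have "j < length (rs @ ss)" using that Gamma_biorthogonal by (simp add: biorthogonal_def)
    then have "B (w + g) ((rs @ ss) ! j) = B (w' + g') ((rs @ ss) ! j)" using eq by simp
    then show ?thesis
      using w \<open>j < length (rs @ ss)\<close>
      by (simp add: bilinear_ladd[OF bil] perp_space_iff k Gamma_pairing)
  qed
  then have "g = g'" unfolding k int_comb_eq_lin_comb by (rule lin_comb_cong)
  then show "w = w' \<and> g = g'" using eq by simp
qed

definition frame_comb :: "(nat \<Rightarrow> real) \<Rightarrow> (nat \<Rightarrow> real) \<Rightarrow> (nat \<Rightarrow> real) \<Rightarrow> 'h" where
  "frame_comb a b c = lin_comb rs a + lin_comb fs b + lin_comb ds c"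

lemma frame_comb_rs:
  assumes "j < length rs"
  shows "B (frame_comb a b c) (rs ! j) = b j"
proof -
  have "B (lin_comb rs a) (rs ! j) = 0"
    using rs_span_orthogonal[OF assms lin_comb_in_span] sym by metis
  moreover have "B (lin_comb fs b) (rs ! j) = b j"
    using biorthogonal_lin_comb[OF bil fs_rs] assms by blast
  moreover have "B (lin_comb ds c) (rs ! j) = 0"
    using assms ds_rs by (intro bilinear_lin_comb_left_eq_0[OF bil])
  ultimately show ?thesis by (simp add: frame_comb_def bilinear_ladd[OF bil])
qed

lemma frame_comb_ss:
  assumes "j < length ss"
  shows "B (frame_comb a b c) (ss ! j) = c j"
proof -
  have "B (lin_comb rs a) (ss ! j) = 0"
    using assms rs_ss by (intro bilinear_lin_comb_left_eq_0[OF bil])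
  moreover have "B (lin_comb fs b) (ss ! j) = 0"
    using assms fs_ss by (intro bilinear_lin_comb_left_eq_0[OF bil])
  moreover have "B (lin_comb ds c) (ss ! j) = c j"
    using biorthogonal_lin_comb[OF bil ds_ss] assms by blast
  ultimately show ?thesis by (simp add: frame_comb_def bilinear_ladd[OF bil])
qed

lemma frame_comb_fs:
  assumes "j < length fs"
  shows "B (frame_comb a b c) (fs ! j) = a j"
proof -
  have "B (lin_comb rs a) (fs ! j) = a j"
    using biorthogonal_lin_comb[OF bil biorthogonal_swap[OF sym fs_rs]] assms by blast
  moreover have "B (lin_comb fs b) (fs ! j) = 0"
    using assms fs_fs by (intro bilinear_lin_comb_left_eq_0[OF bil])
  moreover have "B (lin_comb ds c) (fs ! j) = 0"
    using assms ds_fs by (intro bilinear_lin_comb_left_eq_0[OF bil])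
  ultimately show ?thesis by (simp add: frame_comb_def bilinear_ladd[OF bil])
qed

definition V :: "'h set" where
  "V = {v. \<forall>y\<in>set (rs @ fs @ ss). B v y = 0}"

lemma subspace_V: "subspace V"
  unfolding V_def by (rule subspace_orthogonal_complement[OF bil])

lemma V_subset_perp_space: "V \<subseteq> perp_space B L"
proof
  fix v assume v: "v \<in> V"
  show "v \<in> perp_space B L"
    unfolding perp_space_iff
  proof (intro allI impI)
    fix j assume "j < length (rs @ ss)"
    then have "(rs @ ss) ! j \<in> set (rs @ ss)" by (rule nth_mem)
    then have "(rs @ ss) ! j \<in> set (rs @ fs @ ss)" by auto
    then show "B v ((rs @ ss) ! j) = 0" using v by (simp add: V_def)
  qed
qed

lemma frame_comb_in_span: "frame_comb a b c \<in> span (set (rs @ fs @ ss))"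
proof -
  have sub: "span (set rs) \<subseteq> span (set (rs @ fs @ ss))" "span (set fs) \<subseteq> span (set (rs @ fs @ ss))"
    "span (set ss) \<subseteq> span (set (rs @ fs @ ss))"
    by (intro span_mono; auto)+
  have "span (set ds) \<subseteq> span (set ss)"
    using span_mono[OF ds_span] unfolding span_span .
  then have "lin_comb rs a \<in> span (set (rs @ fs @ ss))" "lin_comb fs b \<in> span (set (rs @ fs @ ss))"
    "lin_comb ds c \<in> span (set (rs @ fs @ ss))"
    using sub lin_comb_in_span by blast+
  then show ?thesis unfolding frame_comb_def by (intro span_add)
qed

lemma V_orthogonal_frame_comb:
  assumes "v \<in> V"
  shows "B v (frame_comb a b c) = 0"
  by (rule bilinear_orthogonal_span[OF bil _ frame_comb_in_span]) (use assms in \<open>simp add: V_def\<close>)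

definition V_part :: "'h \<Rightarrow> 'h" where
  "V_part x = x - frame_comb (\<lambda>j. B x (fs ! j)) (\<lambda>j. B x (rs ! j)) (\<lambda>j. B x (ss ! j))"

lemma V_part_in_V: "V_part x \<in> V"
proof -
  let ?p = "frame_comb (\<lambda>j. B x (fs ! j)) (\<lambda>j. B x (rs ! j)) (\<lambda>j. B x (ss ! j))"
  have "B x y = B ?p y" if y: "y \<in> set (rs @ fs @ ss)" for y
  proof -
    consider (rs) j where "j < length rs" "y = rs ! j" | (fs) j where "j < length fs" "y = fs ! j"
      | (ss) j where "j < length ss" "y = ss ! j"
      using y by (auto simp: in_set_conv_nth)
    then show ?thesis by cases (simp_all add: frame_comb_rs frame_comb_fs frame_comb_ss)
  qed
  then show ?thesis by (simp add: V_def V_part_def bilinear_lsub[OF bil])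
qed

lemma frame_decomposition:
  "x = V_part x + frame_comb (\<lambda>j. B x (fs ! j)) (\<lambda>j. B x (rs ! j)) (\<lambda>j. B x (ss ! j))"
  by (simp add: V_part_def)

lemma V_frame_comb_pairings:
  assumes "v \<in> V"
  shows "j < length rs \<Longrightarrow> B (v + frame_comb a b c) (rs ! j) = b j"
    and "j < length ss \<Longrightarrow> B (v + frame_comb a b c) (ss ! j) = c j"
    and "j < length fs \<Longrightarrow> B (v + frame_comb a b c) (fs ! j) = a j"
  using assms by (simp_all add: V_def bilinear_ladd[OF bil] frame_comb_rs frame_comb_ss frame_comb_fs)

lemma frame_decomposition_unique:
  assumes v: "v \<in> V" "v' \<in> V" and eq: "v + frame_comb a b c = v' + frame_comb a' b' c'"
  shows "lin_comb rs a = lin_comb rs a'" "lin_comb fs b = lin_comb fs b'"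
    "lin_comb ds c = lin_comb ds c'" "v = v'"
proof -
  show a: "lin_comb rs a = lin_comb rs a'"
    using V_frame_comb_pairings(3)[OF v(1)] V_frame_comb_pairings(3)[OF v(2)] eq
    by (intro lin_comb_cong) (metis length_fs)
  show b: "lin_comb fs b = lin_comb fs b'"
    using V_frame_comb_pairings(1)[OF v(1)] V_frame_comb_pairings(1)[OF v(2)] eq
    by (intro lin_comb_cong) (metis length_fs)
  show c: "lin_comb ds c = lin_comb ds c'"
    using V_frame_comb_pairings(2)[OF v(1)] V_frame_comb_pairings(2)[OF v(2)] eq
    by (intro lin_comb_cong) (metis length_ds)
  show "v = v'" using eq a b c by (simp add: frame_comb_def)
qed

lemma dual_lattice_rs: "x \<in> dual_lattice B L \<Longrightarrow> j < length rs \<Longrightarrow> B x (rs ! j) \<in> \<int>"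
  using rs_L nth_mem by (auto simp: dual_lattice_def)

lemma dual_lattice_ss: "x \<in> dual_lattice B L \<Longrightarrow> j < length ss \<Longrightarrow> B x (ss ! j) \<in> \<int>"
  using ss_L nth_mem by (auto simp: dual_lattice_def)

lemma frame_comb_int_comb:
  "v + lin_comb rs u + int_comb fs k + int_comb ds l
     = v + frame_comb u (\<lambda>j. of_int (k j)) (\<lambda>j. of_int (l j))"
  by (simp add: frame_comb_def int_comb_eq_lin_comb add.assoc)

lemma frame_internal_dsum:
  "internal_dsum [V, span (set rs), F, D] (dual_lattice B L)"
proof (rule internal_dsum_4I)
  fix v y g d assume "v \<in> V" "y \<in> span (set rs)" "g \<in> F" "d \<in> D"
  then obtain u k l where "y = lin_comb rs u" "g = int_comb fs k" "d = int_comb ds l"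
    using span_set_lin_comb by blast
  then have sum: "v + y + g + d = v + frame_comb u (\<lambda>j. of_int (k j)) (\<lambda>j. of_int (l j))"
    by (simp add: frame_comb_int_comb)
  have "B (v + frame_comb u (\<lambda>j. of_int (k j)) (\<lambda>j. of_int (l j))) ((rs @ ss) ! j) \<in> \<int>"
    if "j < length (rs @ ss)" for j
    using that by (rule nth_append_cases) (simp_all add: V_frame_comb_pairings[OF \<open>v \<in> V\<close>])
  then show "v + y + g + d \<in> dual_lattice B L" unfolding sum dual_lattice_iff by blast
next
  fix x assume x: "x \<in> dual_lattice B L"
  have "lin_comb fs (\<lambda>j. B x (rs ! j)) = int_comb fs (\<lambda>j. \<lfloor>B x (rs ! j)\<rfloor>)"
    using dual_lattice_rs[OF x] by (intro lin_comb_Ints_eq_int_comb) (simp add: length_fs)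
  then have "lin_comb fs (\<lambda>j. B x (rs ! j)) \<in> F" by simp
  moreover have "lin_comb ds (\<lambda>j. B x (ss ! j)) = int_comb ds (\<lambda>j. \<lfloor>B x (ss ! j)\<rfloor>)"
    using dual_lattice_ss[OF x] by (intro lin_comb_Ints_eq_int_comb) (simp add: length_ds)
  then have "lin_comb ds (\<lambda>j. B x (ss ! j)) \<in> D" by simp
  moreover have "x = V_part x + lin_comb rs (\<lambda>j. B x (fs ! j)) + lin_comb fs (\<lambda>j. B x (rs ! j))
      + lin_comb ds (\<lambda>j. B x (ss ! j))"
    using frame_decomposition[of x] by (simp add: frame_comb_def add.assoc)
  ultimately show "\<exists>v y g d. v \<in> V \<and> y \<in> span (set rs) \<and> g \<in> F \<and>
      d \<in> D \<and> v + y + g + d = x"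
    using V_part_in_V lin_comb_in_span by metis
next
  fix v y g d v' y' g' d'
  assume "v \<in> V" "y \<in> span (set rs)" "g \<in> F" "d \<in> D"
    and "v' \<in> V" "y' \<in> span (set rs)" "g' \<in> F" "d' \<in> D"
    and eq: "v + y + g + d = v' + y' + g' + d'"
  obtain u k l where rep: "y = lin_comb rs u" "g = int_comb fs k" "d = int_comb ds l"
    using \<open>y \<in> span (set rs)\<close> \<open>g \<in> F\<close> \<open>d \<in> D\<close>
      span_set_lin_comb by blast
  obtain u' k' l' where rep': "y' = lin_comb rs u'" "g' = int_comb fs k'" "d' = int_comb ds l'"
    using \<open>y' \<in> span (set rs)\<close> \<open>g' \<in> F\<close> \<open>d' \<in> D\<close>
      span_set_lin_comb by blast
  have "v + frame_comb u (\<lambda>j. of_int (k j)) (\<lambda>j. of_int (l j))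
      = v' + frame_comb u' (\<lambda>j. of_int (k' j)) (\<lambda>j. of_int (l' j))"
    using eq unfolding rep rep' frame_comb_int_comb .
  from frame_decomposition_unique[OF \<open>v \<in> V\<close> \<open>v' \<in> V\<close> this]
  show "v = v' \<and> y = y' \<and> g = g' \<and> d = d'"
    unfolding rep rep' int_comb_eq_lin_comb by blast
qed

lemma span_rs_plus_F_elim:
  assumes "x \<in> set_sum (span (set rs)) F"
  obtains u b where "x = frame_comb u b (\<lambda>_. 0)"
proof -
  obtain u k where "x = lin_comb rs u + int_comb fs k"
    using assms span_set_lin_comb unfolding set_sum_def by blast
  then have "x = frame_comb u (\<lambda>j. of_int (k j)) (\<lambda>_. 0)"
    by (simp add: frame_comb_def int_comb_eq_lin_comb lin_comb_eq_0)
  then show ?thesis using that by blast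
qed

lemma D_elim:
  assumes "x \<in> D"
  obtains c where "x = frame_comb (\<lambda>_. 0) (\<lambda>_. 0) c"
proof -
  obtain k where "x = int_comb ds k" using assms by blast
  then have "x = frame_comb (\<lambda>_. 0) (\<lambda>_. 0) (\<lambda>j. of_int (k j))"
    by (simp add: frame_comb_def int_comb_eq_lin_comb lin_comb_eq_0)
  then show ?thesis using that by blast
qed

lemma V_orthogonal_span_rs_plus_F: "orthogonal_sets B V (set_sum (span (set rs)) F)"
  unfolding orthogonal_sets_def by (metis span_rs_plus_F_elim V_orthogonal_frame_comb)

lemma V_orthogonal_D: "orthogonal_sets B V D"
  unfolding orthogonal_sets_def by (metis D_elim V_orthogonal_frame_comb)

lemma span_rs_plus_F_orthogonal_D:
  "orthogonal_sets B (set_sum (span (set rs)) F) D"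
  unfolding orthogonal_sets_def
proof (intro ballI)
  fix x d assume x_mem: "x \<in> set_sum (span (set rs)) F"
    and "d \<in> D"
  obtain u b where x: "x = frame_comb u b (\<lambda>_. 0)" using x_mem by (rule span_rs_plus_F_elim)
  have "d \<in> span (set ss)"
    using \<open>d \<in> D\<close> range_int_comb_subset_span span_mono[OF ds_span]
    by (auto simp: span_span)
  then have "B (lin_comb rs u) d = 0" "B (lin_comb fs b) d = 0"
    using rs_orthogonal_span span_ss_subset fs_orthogonal_span_ss
    by (auto intro!: bilinear_lin_comb_left_eq_0[OF bil] simp: length_fs)
  then show "B x d = 0" by (simp add: x frame_comb_def bilinear_ladd[OF bil] lin_comb_eq_0)
qed

lemma nondegenerate_on_V: "nondegenerate_on B V"
  unfolding nondegenerate_on_def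
proof (intro ballI impI)
  fix v assume v: "v \<in> V" and orth: "\<forall>y\<in>V. B v y = 0"
  have "B v y = 0" for y
    using frame_decomposition[of y] orth V_part_in_V V_orthogonal_frame_comb[OF v]
    by (metis bilinear_radd[OF bil] add_0)
  then show "v = 0" using nondeg by blast
qed

lemma nondegenerate_on_span_rs_plus_F:
  "nondegenerate_on B (set_sum (span (set rs)) F)"
  unfolding nondegenerate_on_def
proof (intro ballI impI)
  fix x assume x_mem: "x \<in> set_sum (span (set rs)) F"
    and orth: "\<forall>y\<in>set_sum (span (set rs)) F. B x y = 0"
  obtain u b where x: "x = frame_comb u b (\<lambda>_. 0)" using x_mem by (rule span_rs_plus_F_elim)
  have b0: "b j = 0" if "j < length rs" for j
  proof -
    have "rs ! j \<in> span (set rs)" using that by (simp add: span_base)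
    moreover have "0 \<in> F" by (rule add_subgroup_0[OF add_subgroup_range_int_comb])
    ultimately have "rs ! j + 0 \<in> set_sum (span (set rs)) F"
      unfolding set_sum_def by blast
    then have "B x (rs ! j + 0) = 0" using orth by blast
    then show ?thesis using frame_comb_rs[OF that, of u b "\<lambda>_. 0"] by (simp add: x)
  qed
  have u0: "u j = 0" if "j < length fs" for j
  proof -
    have "fs ! j \<in> F" using that set_subset_range_int_comb[of fs] by force
    then have "0 + fs ! j \<in> set_sum (span (set rs)) F"
      unfolding set_sum_def using span_0 by blast
    then have "B x (0 + fs ! j) = 0" using orth by blast
    then show ?thesis using frame_comb_fs[OF that, of u b "\<lambda>_. 0"] by (simp add: x)
  qed
  have "lin_comb rs u = 0" using u0 by (intro lin_comb_eq_0) (simp add: length_fs)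
  moreover have "lin_comb fs b = 0" using b0 by (intro lin_comb_eq_0) (simp add: length_fs)
  ultimately show "x = 0" by (simp add: x frame_comb_def lin_comb_eq_0)
qed

lemma nondegenerate_on_D: "nondegenerate_on B D"
  unfolding nondegenerate_on_def
proof (intro ballI impI)
  fix x assume x_mem: "x \<in> D" and orth: "\<forall>y\<in>D. B x y = 0"
  have "x \<in> span (set ss)"
    using x_mem range_int_comb_subset_span span_mono[OF ds_span] by (auto simp: span_span)
  then obtain u where x: "x = lin_comb ss u" using span_set_lin_comb by blast
  have "u j = 0" if "j < length ds" for j
  proof -
    have "ds ! j \<in> D" using that set_subset_range_int_comb[of ds] by force
    then have "B x (ds ! j) = 0" using orth by blast
    then show ?thesis
      using biorthogonal_lin_comb[OF bil biorthogonal_swap[OF sym ds_ss] that] by (simp add: x)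
  qed
  then show "x = 0" by (simp add: x lin_comb_eq_0 length_ds)
qed

lemma isotropic_span_rs: "\<forall>x\<in>span (set rs). \<forall>y\<in>span (set rs). B x y = 0"
  using span_set_lin_comb rs_span_orthogonal by (metis bilinear_lin_comb_left_eq_0[OF bil])

lemma isotropic_F: "\<forall>x\<in>F. \<forall>y\<in>F. B x y = 0"
proof (intro ballI)
  fix x y assume "x \<in> F" "y \<in> F"
  then obtain k l where xy: "x = int_comb fs k" "y = int_comb fs l" by blast
  have fs_orth: "B (fs ! i) (lin_comb fs c) = 0" if "i < length fs" for i c
    using that fs_fs by (intro bilinear_lin_comb_right_eq_0[OF bil])
  show "B x y = 0"
    unfolding xy int_comb_eq_lin_comb by (rule bilinear_lin_comb_left_eq_0[OF bil fs_orth])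
qed

theorem dual_lattice_decomposition:
  "\<exists>\<Gamma>. \<Gamma> \<subseteq> dual_lattice B L \<and> fg_free_subgroup \<Gamma> \<and>
     internal_dsum [perp_space B L, \<Gamma>] (dual_lattice B L) \<and>
     (\<exists>V F D. subspace V \<and> V \<subseteq> perp_space B L \<and>
        fg_free_subgroup F \<and> F \<subseteq> \<Gamma> \<and> fg_free_subgroup D \<and> D \<subseteq> \<Gamma> \<and>
        internal_dsum [V, span (radical B L), F, D] (dual_lattice B L) \<and>
        orthogonal_sets B V (set_sum (span (radical B L)) F) \<and>
        orthogonal_sets B V D \<and>
        orthogonal_sets B (set_sum (span (radical B L)) F) D \<and>
        nondegenerate_on B V \<and>
        nondegenerate_on B (set_sum (span (radical B L)) F) \<and>
        nondegenerate_on B D \<and>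
        (\<forall>x\<in>span (radical B L). \<forall>y\<in>span (radical B L). B x y = 0) \<and>
        (\<forall>x\<in>F. \<forall>y\<in>F. B x y = 0))"
proof -
  have "F \<subseteq> \<Gamma>"
    "D \<subseteq> \<Gamma>"
    using add_subgroup_int_comb[OF add_subgroup_range_int_comb] set_subset_range_int_comb[of "fs @ ds"]
    by (metis image_subsetI le_sup_iff set_append)+
  then show ?thesis
    unfolding span_radical
    using Gamma_subset_dual_lattice biorthogonal_fg_free_subgroup[OF bil Gamma_biorthogonal]
      perp_space_Gamma_internal_dsum subspace_V V_subset_perp_space
      biorthogonal_fg_free_subgroup[OF bil fs_rs] biorthogonal_fg_free_subgroup[OF bil ds_ss]
      frame_internal_dsum V_orthogonal_span_rs_plus_F V_orthogonal_D span_rs_plus_F_orthogonal_D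
      nondegenerate_on_V nondegenerate_on_span_rs_plus_F nondegenerate_on_D isotropic_span_rs isotropic_F
    by blast
qed

end

section \<open>Splitting off the radical of an even lattice\<close>

lemma int_comb_append:
  "int_comb bs c + int_comb cs d = int_comb (bs @ cs) (\<lambda>i. if i < length bs then c i else d (i - length bs))"
proof -
  have "int_comb bs c = lin_comb bs (\<lambda>i. of_int (if i < length bs then c i else d (i - length bs)))"
    unfolding int_comb_eq_lin_comb by (rule lin_comb_cong) simp
  then show ?thesis by (simp add: int_comb_eq_lin_comb lin_comb_append)
qed

lemma add_subgroup_linear_image:
  assumes "linear f" "add_subgroup G"
  shows "add_subgroup (f ` G)"
  using assms unfolding add_subgroup_def
  by (auto simp flip: linear_add[OF assms(1)] linear_neg[OF assms(1)] intro!: image_eqI[of 0 f 0]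
      simp: linear_0[OF assms(1)])

lemma linear_image_lattice_lift_basis:
  assumes f: "linear f" and G: "add_subgroup G"
    and img: "f ` G \<subseteq> range (int_comb ms)" "independent_list ms"
  obtains ss where "set ss \<subseteq> G" "independent_list (map f ss)" "f ` G = range (int_comb (map f ss))"
proof -
  obtain es where es: "independent_list es" "f ` G = range (int_comb es)" "set es \<subseteq> f ` G"
    using lattice_subgroup_basis[OF img(2) add_subgroup_linear_image[OF f G] img(1)] by blast
  have "\<forall>e\<in>set es. \<exists>x\<in>G. f x = e" using es(3) by blast
  then obtain g where g: "\<And>e. e \<in> set es \<Longrightarrow> g e \<in> G \<and> f (g e) = e" by metis
  then have "map f (map g es) = es" by (simp add: map_idI)
  moreover have "set (map g es) \<subseteq> G" using g by auto
  ultimately show ?thesis using that es by metis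
qed

lemma linear_independent_list_append:
  assumes f: "linear f" and rs: "independent_list rs" "\<And>r. r \<in> set rs \<Longrightarrow> f r = 0"
    and ss: "independent_list (map f ss)"
  shows "independent_list (rs @ ss)"
  unfolding independent_list_def
proof (intro allI impI)
  fix c i assume c: "lin_comb (rs @ ss) c = 0" and i: "i < length (rs @ ss)"
  let ?d = "\<lambda>j. c (length rs + j)"
  have sum: "lin_comb rs c + lin_comb ss ?d = 0" using c by (simp add: lin_comb_append)
  have "f (lin_comb rs c) = 0"
    using linear_eq_0_on_span[OF f] rs(2) lin_comb_in_span by blast
  then have "lin_comb (map f ss) ?d = 0"
    using arg_cong[OF sum, of f] by (simp add: linear_add[OF f] linear_0[OF f] linear_lin_comb[OF f])
  then have d0: "?d j = 0" if "j < length ss" for j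
    using ss that unfolding independent_list_def by (metis length_map)
  then have "lin_comb rs c = 0" using sum lin_comb_eq_0[of ss ?d] by simp
  then have c0: "c j = 0" if "j < length rs" for j
    using rs(1) that unfolding independent_list_def by blast
  show "c i = 0"
  proof (cases "i < length rs")
    case False
    then show ?thesis using d0[of "i - length rs"] i by simp
  qed (rule c0)
qed

text \<open>Correcting dual vectors e_i of the isotropic vectors r_i by half their Gram matrix,
  f_i = e_i - 1/2 \<Sum>_k B(e_i, e_k) r_k, makes them isotropic while keeping the pairings.\<close>
lemma isotropic_dual_vectors:
  fixes B :: "'h::euclidean_space \<Rightarrow> 'h \<Rightarrow> real"
  assumes bil: "bilinear B" and sym: "\<And>x y. B x y = B y x"
    and nondeg: "\<And>x. (\<forall>y. B x y = 0) \<Longrightarrow> x = 0"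
    and ind: "independent_list (rs @ ss)"
    and iso: "\<And>i j. i < length rs \<Longrightarrow> j < length (rs @ ss) \<Longrightarrow> B (rs ! i) ((rs @ ss) ! j) = 0"
  shows "\<exists>fs. biorthogonal B fs rs \<and> (\<forall>i<length fs. \<forall>j<length ss. B (fs ! i) (ss ! j) = 0) \<and>
           (\<forall>i<length fs. \<forall>j<length fs. B (fs ! i) (fs ! j) = 0)"
proof -
  obtain e where e: "\<And>i j. j < length (rs @ ss) \<Longrightarrow> B (e i) ((rs @ ss) ! j) = (if i = j then 1 else 0)"
    using nondegenerate_bilinear_dual_vectors[OF bil nondeg ind] by blast
  have e_rs: "B (e i) (rs ! j) = (if i = j then 1 else 0)" if "j < length rs" for i j
    using e[of j i] that by (simp add: nth_append)
  have e_ss: "B (e i) (ss ! j) = 0" if "i < length rs" "j < length ss" for i j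
    using e[of "length rs + j" i] that by simp
  have rs_rs: "B (rs ! k) (rs ! j) = 0" if "k < length rs" "j < length rs" for k j
    using iso[of k j] that by (simp add: nth_append)
  have rs_ss: "B (rs ! k) (ss ! j) = 0" if "k < length rs" "j < length ss" for k j
    using iso[of k "length rs + j"] that by simp
  have e_comb: "B (e i) (lin_comb rs c) = c i" if "i < length rs" for i c
    using bilinear_lin_comb_left_unit[OF bil that, of "e i"] e_rs sym by (metis (no_types, lifting))
  have comb_comb: "B (lin_comb rs c) (lin_comb rs c') = 0" for c c'
    using rs_rs by (intro bilinear_lin_comb_left_eq_0[OF bil] bilinear_lin_comb_right_eq_0[OF bil])
  define f where "f i = e i - (1/2) *\<^sub>R lin_comb rs (\<lambda>k. B (e i) (e k))" for i
  have f_rs: "B (f i) (rs ! j) = (if i = j then 1 else 0)" if "j < length rs" for i j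
    using that rs_rs bilinear_lin_comb_left_eq_0[OF bil, of rs "rs ! j"]
    by (simp add: f_def bilinear_lsub[OF bil] bilinear_lmul[OF bil] e_rs)
  have f_ss: "B (f i) (ss ! j) = 0" if "i < length rs" "j < length ss" for i j
    using that rs_ss bilinear_lin_comb_left_eq_0[OF bil, of rs "ss ! j"]
    by (simp add: f_def bilinear_lsub[OF bil] bilinear_lmul[OF bil] e_ss)
  have f_f: "B (f i) (f k) = 0" if "i < length rs" "k < length rs" for i k
  proof -
    have "B (f i) (f k) = B (e i) (e k) - (1/2) * B (e i) (lin_comb rs (\<lambda>l. B (e k) (e l)))
        - (1/2) * B (e k) (lin_comb rs (\<lambda>l. B (e i) (e l)))"
      by (simp add: f_def bilinear_lsub[OF bil] bilinear_rsub[OF bil] bilinear_lmul[OF bil]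
          bilinear_rmul[OF bil] comb_comb sym[of "lin_comb rs _" "e k"])
    also have "\<dots> = 0" using that by (simp add: e_comb sym[of "e k" "e i"])
    finally show ?thesis .
  qed
  show ?thesis
    using f_rs f_ss f_f by (intro exI[of _ "map f [0..<length rs]"]) (auto simp: biorthogonal_def)
qed

locale even_lattice =
  fixes B :: "'h::euclidean_space \<Rightarrow> 'h \<Rightarrow> real" and L :: "'h set"
  assumes bil: "bilinear B"
    and sym: "\<And>x y. B x y = B y x"
    and nondeg: "\<And>x. (\<forall>y. B x y = 0) \<Longrightarrow> x = 0"
    and subgroup: "add_subgroup L"
    and discrete: "discrete L"
    and even: "\<And>a. a \<in> L \<Longrightarrow> \<exists>k::int. B a a = 2 * of_int k"
begin

lemma pairing_integral:
  assumes "a \<in> L" "b \<in> L"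
  shows "B a b \<in> \<int>"
proof -
  obtain k1 k2 k3 :: int
    where "B (a + b) (a + b) = 2 * of_int k1" "B a a = 2 * of_int k2" "B b b = 2 * of_int k3"
    using even assms add_subgroup_add[OF subgroup] by metis
  moreover have "B (a + b) (a + b) = B a a + 2 * B a b + B b b"
    using sym[of a b] by (simp add: bilinear_ladd[OF bil] bilinear_radd[OF bil])
  ultimately have "B a b = of_int (k1 - k2 - k3)" by simp
  then show ?thesis by simp
qed

lemma add_subgroup_radical: "add_subgroup (radical B L)"
  using subgroup unfolding add_subgroup_def radical_def
  by (auto simp: bilinear_lzero[OF bil] bilinear_ladd[OF bil] bilinear_lneg[OF bil])

definition pairing_map :: "'h list \<Rightarrow> 'h \<Rightarrow> 'h" where
  "pairing_map ls x = lin_comb ls (\<lambda>j. B x (ls ! j))"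

lemma linear_pairing_map: "linear (pairing_map ls)"
  unfolding linear_iff pairing_map_def
  by (simp add: bilinear_ladd[OF bil] bilinear_lmul[OF bil] lin_comb_add lin_comb_scaleR)

lemma pairing_map_eq_0_iff:
  assumes ls: "independent_list ls" "L = range (int_comb ls)" "set ls \<subseteq> L"
  shows "pairing_map ls x = 0 \<longleftrightarrow> (\<forall>a\<in>L. B x a = 0)"
proof
  assume "pairing_map ls x = 0"
  then have "\<forall>j<length ls. B x (ls ! j) = 0"
    using ls(1) unfolding pairing_map_def independent_list_def by blast
  then show "\<forall>a\<in>L. B x a = 0"
    using ls(2) by (auto simp: int_comb_eq_lin_comb bilinear_lin_comb_right[OF bil])
next
  assume "\<forall>a\<in>L. B x a = 0"
  then show "pairing_map ls x = 0"
    using ls(3) nth_mem unfolding pairing_map_def by (intro lin_comb_eq_0) blast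
qed

lemma pairing_map_lattice:
  assumes "set ls \<subseteq> L"
  shows "pairing_map ls ` L \<subseteq> range (int_comb ls)"
proof
  fix y assume "y \<in> pairing_map ls ` L"
  then obtain x where x: "x \<in> L" "y = pairing_map ls x" by blast
  have "B x (ls ! j) \<in> \<int>" if "j < length ls" for j
    using pairing_integral[OF x(1)] assms that nth_mem by blast
  then have "y = int_comb ls (\<lambda>j. \<lfloor>B x (ls ! j)\<rfloor>)"
    unfolding x(2) pairing_map_def by (rule lin_comb_Ints_eq_int_comb)
  then show "y \<in> range (int_comb ls)" by blast
qed

lemma orthogonal_lattice_if_orthogonal_generators:
  assumes rs: "set rs \<subseteq> radical B L" and L: "L \<subseteq> range (int_comb (rs @ ss))"
    and w: "w \<in> span L" "\<forall>j<length ss. B w (ss ! j) = 0" and a: "a \<in> L"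
  shows "B w a = 0"
proof -
  have w_rs: "B w r = 0" if r: "r \<in> set rs" for r
  proof -
    have "B r y = 0" if "y \<in> L" for y using rs r that by (auto simp: radical_def)
    then have "B r w = 0" using bilinear_orthogonal_span[OF bil] w(1) by blast
    then show ?thesis using sym[of w r] by simp
  qed
  obtain c where c: "a = int_comb (rs @ ss) c" using L a by blast
  show ?thesis unfolding c int_comb_eq_lin_comb
  proof (rule bilinear_lin_comb_right_eq_0[OF bil])
    fix j assume "j < length (rs @ ss)"
    then show "B w ((rs @ ss) ! j) = 0"
      by (rule nth_append_cases) (use w_rs w(2) nth_mem in blast)+
  qed
qed

text \<open>The pairing map with a basis of L kills exactly the vectors orthogonal to L. Its image of L
  is again a lattice, and lifting a basis of that image gives a complement ss of the radical
  on which B is nondegenerate.\<close>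
lemma radical_complement:
  obtains rs ss where "radical B L = range (int_comb rs)" "set ss \<subseteq> L"
    "L \<subseteq> range (int_comb (rs @ ss))" "independent_list (rs @ ss)"
    "\<And>w. w \<in> span (set ss) \<Longrightarrow> \<forall>j<length ss. B w (ss ! j) = 0 \<Longrightarrow> w = 0"
proof -
  obtain ls where ls: "independent_list ls" "L = range (int_comb ls)" "set ls \<subseteq> L"
    using discrete_subgroup_basis[OF subgroup discrete] by blast
  let ?\<phi> = "pairing_map ls"
  obtain ss where ss: "set ss \<subseteq> L" "independent_list (map ?\<phi> ss)"
      "?\<phi> ` L = range (int_comb (map ?\<phi> ss))"
    using linear_image_lattice_lift_basis[OF linear_pairing_map subgroup pairing_map_lattice[OF ls(3)] ls(1)] .
  have radical_L: "radical B L \<subseteq> L" by (auto simp: radical_def)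
  obtain rs where rs: "independent_list rs" "radical B L = range (int_comb rs)" "set rs \<subseteq> radical B L"
    using lattice_subgroup_basis[OF ls(1) add_subgroup_radical] radical_L ls(2) by blast
  have \<phi>_rs: "?\<phi> r = 0" if "r \<in> set rs" for r
    using rs(3) that pairing_map_eq_0_iff[OF ls] by (auto simp: radical_def)
  have "x \<in> range (int_comb (rs @ ss))" if x: "x \<in> L" for x
  proof -
    obtain c where "?\<phi> x = int_comb (map ?\<phi> ss) c" using ss(3) x by blast
    then have "?\<phi> (x - int_comb ss c) = 0"
      by (simp add: int_comb_eq_lin_comb linear_diff[OF linear_pairing_map] linear_lin_comb[OF linear_pairing_map])
    moreover have "x - int_comb ss c \<in> L"
      using add_subgroup_diff[OF subgroup x add_subgroup_int_comb[OF subgroup ss(1)]] .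
    ultimately have "x - int_comb ss c \<in> radical B L"
      using pairing_map_eq_0_iff[OF ls] by (simp add: radical_def)
    then obtain c' where "x = int_comb rs c' + int_comb ss c"
      using rs(2) by (metis diff_add_cancel rangeE)
    then show ?thesis unfolding int_comb_append by blast
  qed
  then have L_subset: "L \<subseteq> range (int_comb (rs @ ss))" by blast
  have nondeg_ss: "w = 0" if w: "w \<in> span (set ss)" "\<forall>j<length ss. B w (ss ! j) = 0" for w
  proof -
    have "w \<in> span L" using w(1) span_mono[OF ss(1)] by blast
    then have "\<forall>a\<in>L. B w a = 0"
      using orthogonal_lattice_if_orthogonal_generators[OF rs(3) L_subset _ w(2)] by blast
    then have "?\<phi> w = 0" using pairing_map_eq_0_iff[OF ls] by blast
    moreover obtain u where "w = lin_comb ss u" using w(1) span_set_lin_comb by blast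
    ultimately have "lin_comb (map ?\<phi> ss) u = 0" by (simp add: linear_lin_comb[OF linear_pairing_map])
    then show "w = 0" using ss(2) \<open>w = lin_comb ss u\<close> by (simp add: independent_list_def lin_comb_eq_0)
  qed
  show ?thesis
  proof (rule that[OF rs(2) ss(1) L_subset _ nondeg_ss])
    show "independent_list (rs @ ss)"
      by (rule linear_independent_list_append[OF linear_pairing_map rs(1) \<phi>_rs ss(2)])
  qed
qed

lemma lattice_frame_exists: "\<exists>rs ss fs ds. lattice_frame B L rs ss fs ds"
proof -
  obtain rs ss where rs_ss: "radical B L = range (int_comb rs)" "set ss \<subseteq> L"
      "L \<subseteq> range (int_comb (rs @ ss))" "independent_list (rs @ ss)"
      and nondeg_ss: "\<And>w. w \<in> span (set ss) \<Longrightarrow> \<forall>j<length ss. B w (ss ! j) = 0 \<Longrightarrow> w = 0"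
    using radical_complement by blast
  have rs_radical: "set rs \<subseteq> radical B L" using rs_ss(1) set_subset_range_int_comb[of rs] by simp
  have "B (rs ! i) ((rs @ ss) ! j) = 0" if "i < length rs" "j < length (rs @ ss)" for i j
  proof -
    have "rs ! i \<in> radical B L" using rs_radical nth_mem[OF that(1)] by blast
    moreover have "(rs @ ss) ! j \<in> L"
      using rs_radical rs_ss(2) nth_mem[OF that(2)] by (auto simp: radical_def)
    ultimately show ?thesis by (simp add: radical_def)
  qed
  then obtain fs where fs: "biorthogonal B fs rs" "\<forall>i<length fs. \<forall>j<length ss. B (fs ! i) (ss ! j) = 0"
      "\<forall>i<length fs. \<forall>j<length fs. B (fs ! i) (fs ! j) = 0"
    using isotropic_dual_vectors[OF bil sym nondeg rs_ss(4)] by blast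
  obtain ds where ds: "biorthogonal B ds ss" "set ds \<subseteq> span (set ss)"
    using dual_basis_in_span[OF bil independent_list_appendD[OF rs_ss(4)]] nondeg_ss by blast
  have "lattice_frame B L rs ss fs ds"
    by unfold_locales (use bil sym nondeg rs_ss fs ds in auto)
  then show ?thesis by blast
qed

end

theorem lemma3p2:
  fixes B :: "'h::euclidean_space \<Rightarrow> 'h \<Rightarrow> real"
    and \<Lambda> :: "'h set"
  assumes bil: "bilinear B"
    and sym: "\<And>x y. B x y = B y x"
    and nondeg: "\<And>x. (\<forall>y. B x y = 0) \<Longrightarrow> x = 0"
    and subgrp: "add_subgroup \<Lambda>"
    and disc: "discrete \<Lambda>"
    and even: "\<And>a. a \<in> \<Lambda> \<Longrightarrow> \<exists>k::int. B a a = 2 * of_int k"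
  shows "\<exists>\<Gamma>. \<Gamma> \<subseteq> dual_lattice B \<Lambda> \<and> fg_free_subgroup \<Gamma> \<and>
           internal_dsum [perp_space B \<Lambda>, \<Gamma>] (dual_lattice B \<Lambda>) \<and>
           (\<exists>V F D. subspace V \<and> V \<subseteq> perp_space B \<Lambda> \<and>
              fg_free_subgroup F \<and> F \<subseteq> \<Gamma> \<and> fg_free_subgroup D \<and> D \<subseteq> \<Gamma> \<and>
              internal_dsum [V, span (radical B \<Lambda>), F, D] (dual_lattice B \<Lambda>) \<and>
              orthogonal_sets B V (set_sum (span (radical B \<Lambda>)) F) \<and>
              orthogonal_sets B V D \<and>
              orthogonal_sets B (set_sum (span (radical B \<Lambda>)) F) D \<and>
              nondegenerate_on B V \<and>
              nondegenerate_on B (set_sum (span (radical B \<Lambda>)) F) \<and>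
              nondegenerate_on B D \<and>
              (\<forall>x\<in>span (radical B \<Lambda>). \<forall>y\<in>span (radical B \<Lambda>). B x y = 0) \<and>
              (\<forall>x\<in>F. \<forall>y\<in>F. B x y = 0))"
proof -
  interpret even_lattice B \<Lambda>
    using assms by unfold_locales
  obtain rs ss fs ds where "lattice_frame B \<Lambda> rs ss fs ds"
    using lattice_frame_exists by blast
  then show ?thesis by (rule lattice_frame.dual_lattice_decomposition)
qed

end
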